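(* Let $(p^1_n)_{n\in\mathbb Z},\dots,(p^d_n)_{n\in\mathbb Z}$ be scalar Lyapunov sequences satisfying $p^i_n=p^i_{-n}$ for all $n\in\mathbb Z$ and $i=1,\dots,d$. Let $(C_n)_{n\in\mathbb Z}$, $C_n=(c^{(n)}_{ij})_{1\le i,j\le d}$, be an arbitrary bounded sequence of upper-triangular matrices in $\mathbb R^{d\times d}$ with $c^{(n)}_{ii}=p^i_n$ for all $n\in\mathbb Z$, $i=1,\dots,d$. Then the dichotomy spectrum of the system $x_{n+1}=C_nx_n$ is \[ \Sigma_{\rm ED}(C)=\bigcup_{i=1}^d\Sigma_{\rm ED}(p^i), \] where $\Sigma_{\rm ED}(p^i)$ is the dichotomy spectrum of the scalar system $z_{n+1}=p^i_nz_n$, $n\in\mathbb Z$.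
   Context: A scalar Lyapunov sequence is a sequence $(p_n)_{n\in\mathbb Z}$ of nonzero reals with $\sup_n|p_n|<\infty$ and $\sup_n|p_n|^{-1}<\infty$. For a sequence $(M_n)_{n\in\mathbb Z}$ of invertible $p\times p$ real matrices with $(M_n)$ and $(M_n^{-1})$ bounded, the evolution operator of $x_{n+1}=M_nx_n$ is $\Phi_M(m,n)=M_{m-1}\cdots M_n$ for $m>n$, $\Phi_M(n,n)=\mathrm{id}$, $\Phi_M(m,n)=M_m^{-1}\cdots M_{n-1}^{-1}$ for $m<n$. The system has an exponential dichotomy (ED) on $\mathbb Z$ if there exist $K,\alpha>0$ and invariant projections $(P_n)_{n\in\mathbb Z}$ ($P_m\Phi_M(m,n)=\Phi_M(m,n)P_n$) with $\|\Phi_M(m,n)P_n\|\le Ke^{-\alpha(m-n)}$ for $m\ge n$ and $\|\Phi_M(m,n)(\mathrm{id}-P_n)\|\le Ke^{\alpha(m-n)}$ for $m\le n$. The dichotomy spectrum $\Sigma_{\rm ED}(M)$ is the set of $\gamma\in\mathbb R$ for which $x_{n+1}=e^{-\gamma}M_nx_n$ has no ED on $\mathbb Z$. *)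

theory Defs
  imports "HOL-Analysis.Analysis"
begin

definition lyapunov_seq :: "(int \<Rightarrow> real) \<Rightarrow> bool" where
  "lyapunov_seq p \<longleftrightarrow> (\<forall>n. p n \<noteq> 0) \<and> bdd_above (range (\<lambda>n. \<bar>p n\<bar>))
     \<and> bdd_above (range (\<lambda>n. 1 / \<bar>p n\<bar>))"

fun fwd_prod :: "(int \<Rightarrow> real^'d^'d) \<Rightarrow> int \<Rightarrow> nat \<Rightarrow> real^'d^'d" where
  "fwd_prod M n 0 = mat 1"
| "fwd_prod M n (Suc k) = M (n + int k) ** fwd_prod M n k"

fun bwd_prod :: "(int \<Rightarrow> real^'d^'d) \<Rightarrow> int \<Rightarrow> nat \<Rightarrow> real^'d^'d" where
  "bwd_prod M n 0 = mat 1"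
| "bwd_prod M n (Suc k) = matrix_inv (M (n - 1 - int k)) ** bwd_prod M n k"

definition evol :: "(int \<Rightarrow> real^'d^'d) \<Rightarrow> int \<Rightarrow> int \<Rightarrow> real^'d^'d" where
  "evol M m n = (if n \<le> m then fwd_prod M n (nat (m - n)) else bwd_prod M n (nat (n - m)))"

definition has_ED :: "(int \<Rightarrow> real^'d^'d) \<Rightarrow> bool" where
  "has_ED M \<longleftrightarrow> (\<exists>K \<alpha> (P :: int \<Rightarrow> real^'d^'d). K > 0 \<and> \<alpha> > 0
     \<and> (\<forall>n. P n ** P n = P n)
     \<and> (\<forall>m n. P m ** evol M m n = evol M m n ** P n)
     \<and> (\<forall>m n. n \<le> m \<longrightarrow> norm (evol M m n ** P n) \<le> K * exp (- \<alpha> * real_of_int (m - n)))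
     \<and> (\<forall>m n. m \<le> n \<longrightarrow> norm (evol M m n ** (mat 1 - P n)) \<le> K * exp (\<alpha> * real_of_int (m - n))))"

definition ED_spectrum :: "(int \<Rightarrow> real^'d^'d) \<Rightarrow> real set" where
  "ED_spectrum M = {\<gamma>. \<not> has_ED (\<lambda>n. exp (- \<gamma>) *\<^sub>R M n)}"

definition scalar_sys :: "(int \<Rightarrow> real) \<Rightarrow> int \<Rightarrow> real^1^1" where
  "scalar_sys p n = mat (p n)"

definition upper_triangular :: "(real, 'd::{finite,linorder}) vec^('d::{finite,linorder}) \<Rightarrow> bool" where
  "upper_triangular A \<longleftrightarrow> (\<forall>i j. j < i \<longrightarrow> A $ i $ j = 0)"

end

theory Submission
  imports Defs
begin

lemma finite_linorder_downward_induct [case_names step]: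
  fixes P :: "'a::{finite,linorder} \<Rightarrow> bool"
  assumes step: "\<And>i. (\<And>j. i < j \<Longrightarrow> P j) \<Longrightarrow> P i"
  shows "P i"
proof (induction i rule: measure_induct_rule[where f = "\<lambda>i. card {j. i < j}"])
  case (less i)
  show ?case
  proof (rule step)
    fix j assume "i < j"
    then have "{k. j < k} \<subset> {k. i < k}" by auto
    then show "P j" by (intro less psubset_card_mono) simp_all
  qed
qed

lemma sum_UNIV_single:
  fixes f :: "'a::finite \<Rightarrow> 'b::comm_monoid_add"
  assumes "\<And>k. k \<noteq> i \<Longrightarrow> f k = 0"
  shows "sum f UNIV = f i"
  using assms by (subst sum.remove[of UNIV i]) (auto intro: sum.neutral)

lemma norm_matrix_eq_sqrt_sum_squares:
  "norm (A :: real^'n^'m) = sqrt (\<Sum>i\<in>UNIV. \<Sum>j\<in>UNIV. (A $ i $ j)\<^sup>2)"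
  by (simp add: norm_vec_def L2_set_def sum_nonneg)

lemma norm_transpose: "norm (transpose A) = norm (A :: real^'n^'m)"
proof -
  have "norm (transpose A) = sqrt (\<Sum>j\<in>UNIV. \<Sum>i\<in>UNIV. (A $ i $ j)\<^sup>2)"
    by (simp add: norm_matrix_eq_sqrt_sum_squares transpose_def)
  also have "\<dots> = sqrt (\<Sum>i\<in>UNIV. \<Sum>j\<in>UNIV. (A $ i $ j)\<^sup>2)"
    by (subst sum.swap) (rule refl)
  also have "\<dots> = norm A"
    by (simp add: norm_matrix_eq_sqrt_sum_squares)
  finally show ?thesis .
qed

lemma abs_matrix_entry_le_norm: "\<bar>A $ i $ j\<bar> \<le> norm (A :: real^'n^'m)"
  using component_le_norm_cart[of "A $ i" j] Finite_Cartesian_Product.norm_nth_le[of A i] by linarith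

lemma norm_matrix_le_entrywise:
  fixes A :: "real^'n^'m"
  assumes "\<And>i j. \<bar>A $ i $ j\<bar> \<le> c"
  shows "norm A \<le> real CARD('m) * real CARD('n) * c"
proof -
  have "norm A \<le> (\<Sum>i\<in>UNIV. norm (A $ i))"
    by (simp add: norm_vec_def L2_set_le_sum)
  also have "\<dots> \<le> (\<Sum>i\<in>(UNIV::'m set). \<Sum>j\<in>(UNIV::'n set). c)"
    by (intro sum_mono order_trans[OF norm_le_l1_cart] assms)
  finally show ?thesis by simp
qed

lemma norm_matrix_vector_mult_le: "norm (A *v x) \<le> norm (A :: real^'n^'m) * norm x"
proof -
  have "norm (A *v x) = L2_set (\<lambda>i. \<bar>A $ i \<bullet> x\<bar>) UNIV"
    by (simp add: norm_vec_def matrix_mult_dot)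
  also have "\<dots> \<le> L2_set (\<lambda>i. norm (A $ i) * norm x) UNIV"
    by (rule L2_set_mono) (simp_all add: Cauchy_Schwarz_ineq2)
  also have "\<dots> = norm A * norm x"
    unfolding norm_vec_def[of A] by (rule L2_set_left_distrib[symmetric]) simp
  finally show ?thesis .
qed

lemma norm_vector_matrix_mult_le: "norm (x v* B) \<le> norm x * norm (B :: real^'n^'m)"
  using norm_matrix_vector_mult_le[of "transpose B" x]
  by (simp add: norm_transpose mult.commute)

lemma norm_matrix_mult_le: "norm (A ** B) \<le> norm (A :: real^'n^'m) * norm (B :: real^'p^'n)"
proof -
  have row: "(A ** B) $ i = A $ i v* B" for i
    by (simp add: vec_eq_iff matrix_matrix_mult_def vector_matrix_mult_def mult.commute)
  have "norm (A ** B) \<le> L2_set (\<lambda>i. norm (A $ i) * norm B) UNIV"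
    unfolding norm_vec_def[of "A ** B"] row
    by (rule L2_set_mono) (simp_all add: norm_vector_matrix_mult_le)
  also have "\<dots> = norm A * norm B"
    unfolding norm_vec_def[of A] by (rule L2_set_left_distrib[symmetric]) simp
  finally show ?thesis .
qed

lemma matrix_mult_diff_distrib:
  fixes A B C :: "'a::ring_1^'n^'n"
  shows "A ** (B - C) = A ** B - A ** C" and "(B - C) ** A = B ** A - C ** A"
  by (simp_all add: matrix_matrix_mult_def vec_eq_iff sum_subtractf algebra_simps)

lemma invertible_matrix_inv:
  assumes "invertible A"
  shows "A ** matrix_inv A = mat 1" and "matrix_inv A ** A = mat 1"
  using someI_ex[OF assms[unfolded invertible_def]] unfolding matrix_inv_def by auto

lemma mat_mult_mat: "(mat a :: 'a::semiring_1^'n^'n) ** mat b = mat (a * b)"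
proof -
  have "(mat a ** mat b :: 'a^'n^'n) $ i $ j = (mat a :: 'a^'n^'n) $ i $ i * (mat b :: 'a^'n^'n) $ i $ j"
    for i j
    unfolding matrix_matrix_mult_def vec_lambda_beta by (rule sum_UNIV_single) (simp add: mat_def)
  then show ?thesis by (simp add: vec_eq_iff mat_def)
qed

lemma upper_triangular_matrix_vector_mult_nth:
  fixes A :: "real^'d::{finite,linorder}^'d::{finite,linorder}"
  assumes "upper_triangular A"
  shows "(A *v x) $ i = A $ i $ i * x $ i + (\<Sum>l\<in>{l. i < l}. A $ i $ l * x $ l)"
proof -
  have "(A *v x) $ i = (\<Sum>l\<in>{l. i \<le> l}. A $ i $ l * x $ l)"
    unfolding matrix_vector_mult_def vec_lambda_beta
    by (rule sum.mono_neutral_right) (use assms in \<open>auto simp: upper_triangular_def not_le\<close>)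
  also have "{l. i \<le> l} = insert i {l. i < l}"
    by auto
  finally show ?thesis
    by simp
qed

lemma upper_triangular_mult:
  fixes A B :: "real^'d::{finite,linorder}^'d::{finite,linorder}"
  assumes A: "upper_triangular A" and B: "upper_triangular B"
  shows "upper_triangular (A ** B)" and "(A ** B) $ i $ i = A $ i $ i * B $ i $ i"
proof -
  show "upper_triangular (A ** B)"
    unfolding upper_triangular_def matrix_matrix_mult_def
  proof (intro allI impI)
    fix i j :: 'd
    assume "j < i"
    then have "A $ i $ k * B $ k $ j = 0" for k
      using A B by (cases "k < i") (auto simp: upper_triangular_def not_less dest: less_le_trans)
    then show "(\<chi> i j. \<Sum>k\<in>UNIV. A $ i $ k * B $ k $ j) $ i $ j = 0"
      unfolding vec_lambda_beta by (intro sum.neutral) blast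
  qed
  show "(A ** B) $ i $ i = A $ i $ i * B $ i $ i"
    unfolding matrix_matrix_mult_def vec_lambda_beta
    by (rule sum_UNIV_single) (use A B in \<open>auto simp: upper_triangular_def dest!: neq_iff[THEN iffD1]\<close>)
qed

text \<open>Back substitution: a solution of \<open>A x = y\<close> vanishes on every upward closed set of
  coordinates on which \<open>y\<close> vanishes.\<close>

lemma upper_triangular_solution_vanishes:
  fixes A :: "real^'d::{finite,linorder}^'d::{finite,linorder}"
  assumes A: "upper_triangular A" "\<And>i. A $ i $ i \<noteq> 0"
    and y: "A *v x = y" "\<And>l. l \<in> U \<Longrightarrow> y $ l = 0"
    and U: "\<And>l l'. l \<in> U \<Longrightarrow> l < l' \<Longrightarrow> l' \<in> U"
  shows "i \<in> U \<Longrightarrow> x $ i = 0"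
proof (induction i rule: finite_linorder_downward_induct)
  case (step i)
  have "(\<Sum>l\<in>{l. i < l}. A $ i $ l * x $ l) = 0"
    using step U by (intro sum.neutral) auto
  then have "A $ i $ i * x $ i = y $ i"
    using upper_triangular_matrix_vector_mult_nth[OF A(1), of x i] y(1) by simp
  then show ?case
    using y(2)[OF step.prems] A(2)[of i] by simp
qed

lemma upper_triangular_invertible:
  fixes A :: "real^'d::{finite,linorder}^'d::{finite,linorder}"
  assumes "upper_triangular A" "\<And>i. A $ i $ i \<noteq> 0"
  shows "invertible A"
proof -
  have "x = 0" if "A *v x = 0" for x
    using upper_triangular_solution_vanishes[OF assms that, of UNIV] by (simp add: vec_eq_iff)
  then show ?thesis
    using matrix_left_invertible_ker invertible_left_inverse by blast
qed

lemma upper_triangular_matrix_inv: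
  fixes A :: "real^'d::{finite,linorder}^'d::{finite,linorder}"
  assumes A: "upper_triangular A" "\<And>i. A $ i $ i \<noteq> 0"
  shows "upper_triangular (matrix_inv A)" and "matrix_inv A $ i $ i = inverse (A $ i $ i)"
proof -
  let ?X = "matrix_inv A"
  have AX: "A ** ?X = mat 1"
    using invertible_matrix_inv upper_triangular_invertible[OF A] by blast
  have "?X $ i $ j = 0" if "j < i" for i j
  proof -
    have "A *v (?X *v axis j 1) = axis j 1"
      by (simp add: matrix_vector_mul_assoc AX)
    then have "(?X *v axis j 1) $ i = 0"
      by (rule upper_triangular_solution_vanishes[OF A, where U = "{l. j < l}"]) (use that in \<open>auto simp: axis_def\<close>)
    then show ?thesis
      by (simp add: matrix_vector_mult_basis column_def)
  qed
  then show X: "upper_triangular ?X"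
    by (simp add: upper_triangular_def)
  have "A $ i $ i * ?X $ i $ i = 1"
    using upper_triangular_mult(2)[OF A(1) X, of i] AX by (simp add: mat_def)
  then show "?X $ i $ i = inverse (A $ i $ i)"
    using A(2)[of i] by (simp add: field_simps)
qed

lemma prod_int_atLeastLessThan_split:
  fixes f :: "int \<Rightarrow> 'a::comm_monoid_mult"
  assumes "k \<le> n" "n \<le> m"
  shows "prod f {k..<m} = prod f {n..<m} * prod f {k..<n}"
proof -
  have "{k..<m} = {k..<n} \<union> {n..<m}"
    using assms by (simp add: ivl_disj_un)
  then show ?thesis
    by (simp add: prod.union_disjoint mult.commute)
qed

lemma prod_int_atLeastLessThan_last:
  fixes f :: "int \<Rightarrow> 'a::comm_monoid_mult"
  shows "n \<le> m \<Longrightarrow> prod f {n..<m + 1} = f m * prod f {n..<m}"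
  using prod_int_atLeastLessThan_split[of n m "m + 1" f]
  by (simp add: atLeastLessThanPlusOne_atLeastAtMost_int mult.commute)

lemma prod_int_atLeastLessThan_first:
  fixes f :: "int \<Rightarrow> 'a::comm_monoid_mult"
  shows "n < m \<Longrightarrow> prod f {n..<m} = f n * prod f {n + 1..<m}"
  using prod_int_atLeastLessThan_split[of n "n + 1" m f]
  by (simp add: atLeastLessThanPlusOne_atLeastAtMost_int mult.commute)

lemma evol_same [simp]: "evol M n n = mat 1"
  by (simp add: evol_def)

lemma evol_forward_step: "n \<le> m \<Longrightarrow> evol M (m + 1) n = M m ** evol M m n"
proof -
  assume "n \<le> m"
  then have "nat (m + 1 - n) = Suc (nat (m - n))" and "n + int (nat (m - n)) = m"
    by simp_all
  then show ?thesis
    using \<open>n \<le> m\<close> by (simp add: evol_def)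
qed

lemma evol_backward_step: "m < n \<Longrightarrow> evol M m n = matrix_inv (M m) ** evol M (m + 1) n"
proof -
  assume "m < n"
  then have "nat (n - m) = Suc (nat (n - (m + 1)))" and "n - 1 - int (nat (n - (m + 1))) = m"
    by simp_all
  then show ?thesis
    using \<open>m < n\<close> by (simp add: evol_def)
qed

context
  fixes M :: "int \<Rightarrow> real^'n^'n"
  assumes invertible: "\<And>n. invertible (M n)"
begin

lemma evol_step: "evol M (m + 1) n = M m ** evol M m n"
proof (cases "n \<le> m")
  case False
  then have "M m ** evol M m n = (M m ** matrix_inv (M m)) ** evol M (m + 1) n"
    by (simp add: evol_backward_step matrix_mul_assoc)
  then show ?thesis
    using invertible_matrix_inv[OF invertible] by simp
qed (rule evol_forward_step)

lemma evol_step_inverse: "evol M (m - 1) n = matrix_inv (M (m - 1)) ** evol M m n"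
  using evol_step[of "m - 1" n] invertible_matrix_inv[OF invertible]
  by (simp add: matrix_mul_assoc)

lemma evol_unique:
  assumes "\<And>m. f (m + 1) = M m ** f m"
  shows "f m = evol M m n ** f n"
proof (induction m rule: int_induct[where k = n])
  case (step1 m)
  then show ?case
    by (simp add: assms evol_step matrix_mul_assoc)
next
  case (step2 m)
  have "f m = M (m - 1) ** f (m - 1)"
    using assms[of "m - 1"] by simp
  then have "f (m - 1) = matrix_inv (M (m - 1)) ** f m"
    using invertible_matrix_inv[OF invertible] by (simp add: matrix_mul_assoc)
  then show ?case
    by (simp add: step2 evol_step_inverse matrix_mul_assoc)
qed simp

lemma evol_cocycle: "evol M m k ** evol M k n = evol M m n"
  using evol_unique[of "\<lambda>m. evol M m n" m k] by (simp add: evol_step)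

end

lemma evol_similar:
  assumes "\<And>n. invertible (A n)" and "\<And>n. invertible (B n)"
    and "\<And>n. A n ** T n = T (n + 1) ** B n"
  shows "evol A m n ** T n = T m ** evol B m n"
proof -
  have "T m ** evol B m n = evol A m n ** (T n ** evol B n n)"
    by (rule evol_unique[OF assms(1)])
      (simp add: evol_step[OF assms(2)] matrix_mul_assoc flip: assms(3))
  then show ?thesis
    by simp
qed

lemma evol_commute:
  assumes "\<And>n. invertible (A n)" and "\<And>n. A n ** X = X ** A n"
  shows "evol A m n ** X = X ** evol A m n"
  by (rule evol_similar[OF assms(1) assms(1)]) (rule assms(2))

definition scalar_evol :: "(int \<Rightarrow> real) \<Rightarrow> int \<Rightarrow> int \<Rightarrow> real" where
  "scalar_evol q m n = (if n \<le> m then prod q {n..<m} else inverse (prod q {m..<n}))"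

lemma scalar_evol_same [simp]: "scalar_evol q n n = 1"
  by (simp add: scalar_evol_def)

lemma scalar_evol_step:
  assumes "\<And>l. q l \<noteq> 0"
  shows "scalar_evol q (m + 1) n = q m * scalar_evol q m n"
proof (cases "n \<le> m")
  case False
  then have "prod q {m..<n} = q m * prod q {m + 1..<n}"
    by (simp add: prod_int_atLeastLessThan_first)
  then show ?thesis
    using False assms by (cases "n = m + 1") (auto simp: scalar_evol_def)
qed (simp add: scalar_evol_def prod_int_atLeastLessThan_last)

lemma scalar_evol_nonzero: "(\<And>l. q l \<noteq> 0) \<Longrightarrow> scalar_evol q m n \<noteq> 0"
  by (simp add: scalar_evol_def)

lemma evol_mat:
  assumes "\<And>l. q l \<noteq> 0"
  shows "evol (\<lambda>n. mat (q n) :: real^'n^'n) m n = mat (scalar_evol q m n)"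
proof -
  have inv: "invertible (mat (q n) :: real^'n^'n)" for n
    using assms[of n] by (auto simp: invertible_def mat_mult_mat intro!: exI[of _ "mat (inverse (q n))"])
  have "mat (scalar_evol q m n) = evol (\<lambda>n. mat (q n) :: real^'n^'n) m n ** mat (scalar_evol q n n)"
    by (rule evol_unique[of "\<lambda>n. mat (q n)", OF inv]) (simp add: mat_mult_mat scalar_evol_step[OF assms])
  then show ?thesis
    by simp
qed

lemma upper_triangular_evol:
  fixes M :: "int \<Rightarrow> real^'d::{finite,linorder}^'d::{finite,linorder}"
  assumes ut: "\<And>n. upper_triangular (M n)" and diag: "\<And>n i. M n $ i $ i \<noteq> 0"
  shows "upper_triangular (evol M m n) \<and> evol M m n $ i $ i = scalar_evol (\<lambda>l. M l $ i $ i) m n"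
proof -
  have inv: "invertible (M n)" for n
    using upper_triangular_invertible[OF ut diag] .
  show ?thesis
  proof (induction m arbitrary: i rule: int_induct[where k = n])
    case (step1 m)
    then show ?case
      using upper_triangular_mult[OF ut] scalar_evol_step[of "\<lambda>l. M l $ i $ i", OF diag]
      by (simp add: evol_step[OF inv])
  next
    case (step2 m)
    have "scalar_evol (\<lambda>l. M l $ i $ i) m n
        = M (m - 1) $ i $ i * scalar_evol (\<lambda>l. M l $ i $ i) (m - 1) n"
      using scalar_evol_step[of "\<lambda>l. M l $ i $ i" "m - 1", OF diag] by simp
    then show ?case
      using upper_triangular_mult[OF upper_triangular_matrix_inv(1)[OF ut diag]] step2 diag[of "m - 1" i]
      by (simp add: evol_step_inverse[OF inv] upper_triangular_matrix_inv(2)[OF ut diag] field_simps)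
  qed (simp add: upper_triangular_def mat_def)
qed

lemma has_EDI:
  assumes "0 < K" "0 < \<alpha>" "\<And>n. P n ** P n = P n"
    and "\<And>m n. P m ** evol M m n = evol M m n ** P n"
    and "\<And>m n. n \<le> m \<Longrightarrow> norm (evol M m n ** P n) \<le> K * exp (- \<alpha> * real_of_int (m - n))"
    and "\<And>m n. m \<le> n \<Longrightarrow> norm (evol M m n ** (mat 1 - P n)) \<le> K * exp (\<alpha> * real_of_int (m - n))"
  shows "has_ED M"
  unfolding has_ED_def using assms by blast

lemma has_EDE:
  assumes "has_ED M"
  obtains K \<alpha> P where "0 < K" "0 < \<alpha>" "\<And>n. P n ** P n = P n"
    and "\<And>m n. P m ** evol M m n = evol M m n ** P n"
    and "\<And>m n. n \<le> m \<Longrightarrow> norm (evol M m n ** P n) \<le> K * exp (- \<alpha> * real_of_int (m - n))"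
    and "\<And>m n. m \<le> n \<Longrightarrow> norm (evol M m n ** (mat 1 - P n)) \<le> K * exp (\<alpha> * real_of_int (m - n))"
  using assms unfolding has_ED_def by blast

definition contracting_on :: "int set \<Rightarrow> (int \<Rightarrow> real) \<Rightarrow> bool" where
  "contracting_on I q \<longleftrightarrow> (\<exists>K \<alpha>. 0 < K \<and> 0 < \<alpha> \<and>
     (\<forall>m\<in>I. \<forall>n\<in>I. n \<le> m \<longrightarrow> \<bar>prod q {n..<m}\<bar> \<le> K * exp (- \<alpha> * real_of_int (m - n))))"

abbreviation expanding_on :: "int set \<Rightarrow> (int \<Rightarrow> real) \<Rightarrow> bool" where
  "expanding_on I q \<equiv> contracting_on I (\<lambda>n. inverse (q n))"

lemma prod_inverse_int: "prod (\<lambda>n. inverse (q n)) {n..<m} = inverse (prod q {n..<m} :: 'a::field)"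
  using prod_inversef[of q] by (simp add: comp_def)

lemma real11_eq_mat: "(x :: real^1^1) = mat (x $ 1 $ 1)"
  by (simp add: vec_eq_iff mat_def)

lemma mat_eq_iff [simp]: "(mat a :: 'a::zero^'n^'n) = mat b \<longleftrightarrow> a = b"
proof
  assume "(mat a :: 'a^'n^'n) = mat b"
  then have "(mat a :: 'a^'n^'n) $ i $ i = (mat b :: 'a^'n^'n) $ i $ i" for i
    by simp
  then show "a = b"
    by (simp add: mat_def)
qed simp

lemma norm_mat_real11: "norm (mat c :: real^1^1) = \<bar>c\<bar>"
  by (simp add: norm_vector_1 mat_def)

lemma has_ED_mat_iff:
  assumes nz: "\<And>n. q n \<noteq> 0"
  shows "has_ED (\<lambda>n. mat (q n) :: real^1^1) \<longleftrightarrow> contracting_on UNIV q \<or> expanding_on UNIV q"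
    (is "has_ED ?M \<longleftrightarrow> _")
proof
  assume "has_ED ?M"
  then obtain K \<alpha> P where K: "0 < K" "0 < \<alpha>" and idem: "\<And>n. P n ** P n = P n"
    and com: "\<And>m n. P m ** evol ?M m n = evol ?M m n ** P n"
    and st: "\<And>m n. n \<le> m \<Longrightarrow> norm (evol ?M m n ** P n) \<le> K * exp (- \<alpha> * real_of_int (m - n))"
    and un: "\<And>m n. m \<le> n \<Longrightarrow> norm (evol ?M m n ** (mat 1 - P n)) \<le> K * exp (\<alpha> * real_of_int (m - n))"
    by (rule has_EDE) blast
  define c where "c n = P n $ 1 $ 1" for n
  have P: "P n = mat (c n)" for n
    unfolding c_def by (rule real11_eq_mat)
  have "c n * c n = c n" for n
    using idem[of n] by (simp add: P mat_mult_mat)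
  then have c01: "c n = 0 \<or> c n = 1" for n
    by (metis mult_cancel_right1)
  have c_const: "c m = c n" for m n
  proof -
    have "(c m - c n) * scalar_evol q m n = 0"
      using com[of m n] by (simp add: P evol_mat[OF nz] mat_mult_mat algebra_simps)
    then show ?thesis
      using scalar_evol_nonzero[of q m n] nz by simp
  qed
  show "contracting_on UNIV q \<or> expanding_on UNIV q"
  proof (cases "c 0 = 1")
    case True
    then have "P n = mat 1" for n
      using P c_const by metis
    then have "\<bar>prod q {n..<m}\<bar> \<le> K * exp (- \<alpha> * real_of_int (m - n))" if "n \<le> m" for m n
      using st[OF that] that by (simp add: evol_mat[OF nz] norm_mat_real11 scalar_evol_def)
    then show ?thesis
      unfolding contracting_on_def using K by blast
  next
    case False
    then have "P n = mat 0" for n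
      using P c_const c01 by metis
    then have "\<bar>prod (\<lambda>l. inverse (q l)) {n..<m}\<bar> \<le> K * exp (- \<alpha> * real_of_int (m - n))"
      if "n \<le> m" for m n
      using un[OF that] that
      by (cases "m = n") (auto simp: evol_mat[OF nz] norm_mat_real11 scalar_evol_def prod_inverse_int
          right_diff_distrib)
    then show ?thesis
      unfolding contracting_on_def using K by blast
  qed
next
  assume "contracting_on UNIV q \<or> expanding_on UNIV q"
  then show "has_ED ?M"
  proof
    assume "contracting_on UNIV q"
    then obtain K \<alpha> where K: "0 < K" "0 < \<alpha>"
      and bound: "\<And>m n. n \<le> m \<Longrightarrow> \<bar>prod q {n..<m}\<bar> \<le> K * exp (- \<alpha> * real_of_int (m - n))"
      unfolding contracting_on_def by blast
    show "has_ED ?M"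
    proof (rule has_EDI[where P = "\<lambda>n. mat 1", OF K])
      fix m n :: int
      assume "n \<le> m"
      then show "norm (evol ?M m n ** mat 1) \<le> K * exp (- \<alpha> * real_of_int (m - n))"
        using bound by (simp add: evol_mat[OF nz] norm_mat_real11 scalar_evol_def)
    qed (use K in simp_all)
  next
    assume "expanding_on UNIV q"
    then obtain K \<alpha> where K: "0 < K" "0 < \<alpha>"
      and bound: "\<And>m n. n \<le> m \<Longrightarrow> \<bar>inverse (prod q {n..<m})\<bar> \<le> K * exp (- \<alpha> * real_of_int (m - n))"
      unfolding contracting_on_def prod_inverse_int by blast
    have "\<bar>scalar_evol q m n\<bar> \<le> K * exp (\<alpha> * real_of_int (m - n))" if "m \<le> n" for m n
      using bound[OF that] that K by (cases "m = n") (auto simp: scalar_evol_def right_diff_distrib)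
    then show "has_ED ?M"
      by (intro has_EDI[where P = "\<lambda>n. 0", OF K]) (use K in \<open>simp_all add: evol_mat[OF nz] norm_mat_real11\<close>)
  qed
qed

lemma contracting_onD:
  assumes "contracting_on I q"
  obtains K \<alpha> where "0 < K" "0 < \<alpha>"
    and "\<And>m n. m \<in> I \<Longrightarrow> n \<in> I \<Longrightarrow> n \<le> m \<Longrightarrow> \<bar>prod q {n..<m}\<bar> \<le> K * exp (- \<alpha> * real_of_int (m - n))"
  using assms unfolding contracting_on_def by blast

lemma contracting_on_mult:
  assumes "contracting_on I f" and "contracting_on I g"
  shows "contracting_on I (\<lambda>n. f n * g n)"
proof -
  obtain K \<alpha> where K: "0 < K" "0 < \<alpha>"
    and f: "\<And>m n. m \<in> I \<Longrightarrow> n \<in> I \<Longrightarrow> n \<le> m \<Longrightarrow> \<bar>prod f {n..<m}\<bar> \<le> K * exp (- \<alpha> * real_of_int (m - n))"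
    using assms(1) by (rule contracting_onD) blast
  obtain L \<beta> where L: "0 < L" "0 < \<beta>"
    and g: "\<And>m n. m \<in> I \<Longrightarrow> n \<in> I \<Longrightarrow> n \<le> m \<Longrightarrow> \<bar>prod g {n..<m}\<bar> \<le> L * exp (- \<beta> * real_of_int (m - n))"
    using assms(2) by (rule contracting_onD) blast
  have "\<bar>prod (\<lambda>n. f n * g n) {n..<m}\<bar> \<le> (K * L) * exp (- \<alpha> * real_of_int (m - n))"
    if "m \<in> I" "n \<in> I" "n \<le> m" for m n
  proof -
    have "\<bar>prod (\<lambda>n. f n * g n) {n..<m}\<bar> = \<bar>prod f {n..<m}\<bar> * \<bar>prod g {n..<m}\<bar>"
      by (simp add: prod.distrib abs_mult)
    also have "\<dots> \<le> (K * exp (- \<alpha> * real_of_int (m - n))) * L"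
    proof (rule mult_mono)
      have "exp (- \<beta> * real_of_int (m - n)) \<le> 1"
        using L that by simp
      then show "\<bar>prod g {n..<m}\<bar> \<le> L"
        using g[OF that] L by (meson order_trans mult_left_le less_imp_le)
    qed (use f[OF that] K in auto)
    finally show ?thesis
      by (simp add: ac_simps)
  qed
  then show ?thesis
    unfolding contracting_on_def using K L by (intro exI[of _ "K * L"] exI[of _ \<alpha>]) auto
qed

lemma contracting_on_uniform:
  fixes q :: "'i::finite \<Rightarrow> int \<Rightarrow> real"
  assumes "\<And>i. contracting_on I (q i)"
  obtains K \<alpha> where "0 < K" "0 < \<alpha>"
    and "\<And>i m n. m \<in> I \<Longrightarrow> n \<in> I \<Longrightarrow> n \<le> m
           \<Longrightarrow> \<bar>prod (q i) {n..<m}\<bar> \<le> K * exp (- \<alpha> * real_of_int (m - n))"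
proof -
  have "\<forall>i. \<exists>K \<alpha>. 0 < K \<and> 0 < \<alpha> \<and> (\<forall>m\<in>I. \<forall>n\<in>I. n \<le> m \<longrightarrow>
          \<bar>prod (q i) {n..<m}\<bar> \<le> K * exp (- \<alpha> * real_of_int (m - n)))"
    using assms unfolding contracting_on_def by blast
  then obtain Ki \<alpha>i where pos: "\<And>i. 0 < Ki i" "\<And>i. 0 < \<alpha>i i"
    and bound: "\<And>i m n. m \<in> I \<Longrightarrow> n \<in> I \<Longrightarrow> n \<le> m
                  \<Longrightarrow> \<bar>prod (q i) {n..<m}\<bar> \<le> Ki i * exp (- \<alpha>i i * real_of_int (m - n))"
    by metis
  define K where "K = Max (range Ki)"
  define \<alpha> where "\<alpha> = Min (range \<alpha>i)"
  have K: "Ki i \<le> K" and \<alpha>: "\<alpha> \<le> \<alpha>i i" for i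
    unfolding K_def \<alpha>_def by simp_all
  show ?thesis
  proof (rule that)
    show "0 < K"
      using pos(1) K by (meson less_le_trans)
    show "0 < \<alpha>"
      unfolding \<alpha>_def using pos(2) by simp
    fix i m n
    assume mn: "m \<in> I" "n \<in> I" "n \<le> m"
    have "exp (- \<alpha>i i * real_of_int (m - n)) \<le> exp (- \<alpha> * real_of_int (m - n))"
      using \<alpha>[of i] mn by (simp add: mult_right_mono)
    then show "\<bar>prod (q i) {n..<m}\<bar> \<le> K * exp (- \<alpha> * real_of_int (m - n))"
      using bound[OF mn] K[of i] pos(1)[of i] by (meson order_trans mult_mono exp_ge_zero less_imp_le)
  qed
qed

lemma prod_int_reflect:
  fixes q :: "int \<Rightarrow> 'a::comm_monoid_mult"
  shows "prod (\<lambda>k. q (- k - 1)) {n..<m} = prod q {- m..<- n}"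
  by (rule prod.reindex_bij_witness[where i = "\<lambda>k. - k - 1" and j = "\<lambda>k. - k - 1"]) auto

lemma prod_int_mirror:
  fixes q :: "int \<Rightarrow> 'a::comm_monoid_mult"
  assumes "\<And>l. q (- l) = q l"
  shows "prod q {n..<m} = prod q {1 - m..<1 - n}"
  by (rule prod.reindex_bij_witness[where i = "\<lambda>l. - l" and j = "\<lambda>l. - l"]) (auto simp: assms)

lemma contracting_on_reflect:
  assumes "contracting_on UNIV q"
  shows "contracting_on UNIV (\<lambda>k. q (- k - 1))"
proof -
  obtain K \<alpha> where K: "0 < K" "0 < \<alpha>"
    and bound: "\<And>m n. n \<le> m \<Longrightarrow> \<bar>prod q {n..<m}\<bar> \<le> K * exp (- \<alpha> * real_of_int (m - n))"
    using assms by (rule contracting_onD) blast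
  have "\<bar>prod (\<lambda>k. q (- k - 1)) {n..<m}\<bar> \<le> K * exp (- \<alpha> * real_of_int (m - n))" if "n \<le> m" for m n
    using bound[of "- m" "- n"] that by (simp add: prod_int_reflect)
  then show ?thesis
    unfolding contracting_on_def using K by blast
qed

lemma contracting_on_symmetric_extension:
  assumes sym: "\<And>l. q (- l) = q l" and "contracting_on {0..} q"
  shows "contracting_on UNIV q"
proof -
  obtain K \<alpha> where K: "0 < K" "0 < \<alpha>"
    and pos: "\<And>m n. 0 \<le> n \<Longrightarrow> n \<le> m \<Longrightarrow> \<bar>prod q {n..<m}\<bar> \<le> K * exp (- \<alpha> * real_of_int (m - n))"
    using assms(2) by (rule contracting_onD) auto
  have neg: "\<bar>prod q {n..<m}\<bar> \<le> K * exp (- \<alpha> * real_of_int (m - n))" if "n \<le> m" "m \<le> 0" for m n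
    using pos[of "1 - m" "1 - n"] that by (simp add: prod_int_mirror[of q, OF sym, of n m])
  have "\<bar>prod q {n..<m}\<bar> \<le> (K + K * K) * exp (- \<alpha> * real_of_int (m - n))" if "n \<le> m" for m n
  proof -
    have "\<bar>prod q {n..<m}\<bar> \<le> K * exp (- \<alpha> * real_of_int (m - n))
        \<or> \<bar>prod q {n..<m}\<bar> \<le> K * K * exp (- \<alpha> * real_of_int (m - n))"
    proof (cases "0 \<le> n \<or> m \<le> 0")
      case True
      then show ?thesis
        using pos neg that by blast
    next
      case False
      then have "\<bar>prod q {n..<m}\<bar> = \<bar>prod q {0..<m}\<bar> * \<bar>prod q {n..<0}\<bar>"
        by (simp add: prod_int_atLeastLessThan_split[of n 0 m] abs_mult)
      also have "\<dots> \<le> (K * exp (- \<alpha> * real_of_int (m - 0))) * (K * exp (- \<alpha> * real_of_int (0 - n)))"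
        using pos[of 0 m] neg[of n 0] False by (intro mult_mono) auto
      also have "\<dots> = K * K * exp (- \<alpha> * real_of_int (m - n))"
        by (simp add: algebra_simps flip: exp_add)
      finally show ?thesis ..
    qed
    moreover have "K * exp (- \<alpha> * real_of_int (m - n)) \<le> (K + K * K) * exp (- \<alpha> * real_of_int (m - n))"
      and "K * K * exp (- \<alpha> * real_of_int (m - n)) \<le> (K + K * K) * exp (- \<alpha> * real_of_int (m - n))"
      using K by (simp_all add: mult_right_mono)
    ultimately show ?thesis
      by linarith
  qed
  moreover have "0 < K + K * K"
    using K by (simp add: add_pos_nonneg)
  ultimately show ?thesis
    unfolding contracting_on_def using K(2) by blast
qed

lemma bounded_solution_contracting:
  assumes "contracting_on UNIV r" and f: "\<And>n. \<bar>f n\<bar> \<le> F"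
  obtains t B where "\<And>n. t (n + 1) = r n * t n + f n" and "\<And>n. \<bar>t n\<bar> \<le> B"
proof -
  obtain K \<alpha> where K: "0 < K" "0 < \<alpha>"
    and bound: "\<And>m n. n \<le> m \<Longrightarrow> \<bar>prod r {n..<m}\<bar> \<le> K * exp (- \<alpha> * real_of_int (m - n))"
    using assms(1) by (rule contracting_onD) auto
  define g where "g i = K * F * exp (- \<alpha>) ^ i" for i :: nat
  have g: "summable g"
    unfolding g_def using K by (intro summable_mult summable_geometric) simp
  define u where "u n i = prod r {n - int i..<n} * f (n - int i - 1)" for n i
  have u: "norm (u n i) \<le> g i" for n i
  proof -
    have "\<bar>prod r {n - int i..<n}\<bar> \<le> K * exp (- \<alpha>) ^ i"
      using bound[of "n - int i" n] by (simp add: exp_of_nat_mult[symmetric] mult.commute)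
    then show ?thesis
      unfolding u_def g_def using f[of "n - int i - 1"] f[of 0] abs_ge_zero[of "f 0"]
      by (simp add: abs_mult mult_mono' ac_simps)
  qed
  have summable: "summable (u n)" for n
    by (rule summable_comparison_test'[OF g u])
  define t where "t n = suminf (u n)" for n
  have "t (n + 1) = r n * t n + f n" for n
  proof -
    have "u (n + 1) (Suc i) = r n * u n i" for i
      using prod_int_atLeastLessThan_last[of "n - int i" n r] by (simp add: u_def algebra_simps)
    moreover have "u (n + 1) 0 = f n"
      by (simp add: u_def)
    ultimately show ?thesis
      using suminf_split_head[OF summable[of "n + 1"]] suminf_mult[OF summable[of n], of "r n"]
      by (simp add: t_def)
  qed
  moreover have "\<bar>t n\<bar> \<le> suminf g" for n
    unfolding t_def using norm_suminf_le[OF u g] by simp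
  ultimately show ?thesis
    by (rule that)
qed

text \<open>In the expanding case the equation is solved backwards in time: the reflected sequence
  \<open>s k = t (- k)\<close> satisfies a contracting equation.\<close>

lemma bounded_solution:
  assumes nz: "\<And>n. r n \<noteq> 0" and dich: "contracting_on UNIV r \<or> expanding_on UNIV r"
    and f: "\<And>n. \<bar>f n\<bar> \<le> F"
  obtains t B where "\<And>n. t (n + 1) = r n * t n + f n" and "\<And>n. \<bar>t n\<bar> \<le> B"
  using dich
proof
  assume "contracting_on UNIV r"
  then show thesis
    using f that by (rule bounded_solution_contracting)
next
  assume exp: "expanding_on UNIV r"
  then obtain K \<alpha> where K: "0 < K" "0 < \<alpha>"
    and bound: "\<And>m n. n \<le> m \<Longrightarrow> \<bar>prod (\<lambda>n. inverse (r n)) {n..<m}\<bar> \<le> K * exp (- \<alpha> * real_of_int (m - n))"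
    by (rule contracting_onD) auto
  have r_inv: "\<bar>inverse (r n)\<bar> \<le> K" for n
  proof -
    have "\<bar>inverse (r n)\<bar> \<le> K * exp (- \<alpha>)"
      using bound[of n "n + 1"] by (simp add: atLeastLessThanPlusOne_atLeastAtMost_int)
    also have "\<dots> \<le> K * 1"
      using K by (intro mult_left_mono) auto
    finally show ?thesis
      by simp
  qed
  obtain s B where s: "\<And>k. s (k + 1) = inverse (r (- k - 1)) * s k + - inverse (r (- k - 1)) * f (- k - 1)"
    and B: "\<And>k. \<bar>s k\<bar> \<le> B"
  proof (rule bounded_solution_contracting[of "\<lambda>k. inverse (r (- k - 1))" "\<lambda>k. - inverse (r (- k - 1)) * f (- k - 1)" "K * F"])
    show "contracting_on UNIV (\<lambda>k. inverse (r (- k - 1)))"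
      using contracting_on_reflect[OF exp] by simp
    show "\<bar>- inverse (r (- k - 1)) * f (- k - 1)\<bar> \<le> K * F" for k
      using r_inv f by (simp add: abs_mult mult_mono')
  qed (rule that)
  show thesis
  proof (rule that)
    fix n
    have "s (- n) = inverse (r n) * s (- n - 1) - inverse (r n) * f n"
      using s[of "- n - 1"] by simp
    then have "s (- n - 1) = r n * s (- n) + f n"
      using nz[of n] by (simp add: field_simps)
    moreover have "- (n + 1) = - n - 1"
      by simp
    ultimately show "s (- (n + 1)) = r n * s (- n) + f n"
      by (simp only:)
  qed (rule B)
qed

text \<open>A projection with the same range as \<open>P\<close> that leaves \<open>V\<close> invariant: its kernel is spanned
  by a complement of \<open>range P \<inter> V\<close> inside \<open>V\<close> together with further vectors outside \<open>V\<close>.\<close>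

lemma projection_adapted_to_subspace:
  fixes P :: "real^'n^'n" and V :: "(real^'n) set"
  assumes idem: "P ** P = P" and V: "subspace V"
  obtains Q where "P ** Q = Q" and "Q ** P = P" and "\<And>v. v \<in> V \<Longrightarrow> Q *v v \<in> V"
proof -
  define S where "S = {x. P *v x = x}"
  have S: "subspace S"
    unfolding S_def subspace_def by (auto simp: matrix_vector_right_distrib matrix_vector_mult_scaleR)
  obtain B1 where B1: "B1 \<subseteq> S \<inter> V" "independent B1" "S \<inter> V \<subseteq> span B1" "card B1 = dim (S \<inter> V)"
    by (rule basis_exists)
  obtain B2 where B2: "B1 \<subseteq> B2" "B2 \<subseteq> V" "independent B2" "V \<subseteq> span B2"
    using B1(1,2) by (rule maximal_independent_subset_extend[OF order_trans[OF _ Int_lower2]])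
  obtain B where B: "B2 \<subseteq> B" "B \<subseteq> B2 \<union> S" "independent B" "B2 \<union> S \<subseteq> span B"
    by (rule maximal_independent_subset_extend[OF Un_upper1 B2(3)])
  obtain Bf where Bf: "B \<subseteq> Bf" "Bf \<subseteq> UNIV" "independent Bf" "UNIV \<subseteq> span Bf"
    by (rule maximal_independent_subset_extend[OF subset_UNIV B(3)])
  define f where "f x = (if x \<in> B1 \<union> (B - B2) then x else 0)" for x :: "real^'n"
  obtain g where g: "linear g" "\<And>x. x \<in> Bf \<Longrightarrow> g x = f x"
    using linear_independent_extend[OF Bf(3), of f] by blast
  have "g ` Bf \<subseteq> S"
    using B1 B subspace_0[OF S] by (auto simp: g f_def)
  then have gS: "g x \<in> S" for x
    using span_minimal[OF _ S] linear_span_image[OF g(1), of Bf] Bf(4) by blast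
  have g_id: "g x = x" if x: "x \<in> span (B1 \<union> (B - B2))" for x
  proof -
    have "g b = id b" if "b \<in> B1 \<union> (B - B2)" for b
    proof -
      have "b \<in> Bf"
        using that B2(1) B(1) Bf(1) by blast
      then show ?thesis
        using that g(2) by (simp add: f_def)
    qed
    then show ?thesis
      using linear_eq_on[OF g(1) linear_id x] by simp
  qed
  have g_id_S: "g s = s" if s: "s \<in> S" for s
  proof -
    have "B2 \<union> (B - B2) = B"
      using B(1) by blast
    then have "s \<in> span (B2 \<union> (B - B2))"
      using B(4) s by auto
    then obtain b2 b3 where b: "s = b2 + b3" "b2 \<in> span B2" "b3 \<in> span (B - B2)"
      unfolding span_Un by blast
    have "b3 \<in> S"
      using b(3) B span_minimal[OF _ S] by blast
    moreover have "b2 \<in> V"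
      using b(2) B2 span_minimal[OF _ V] by blast
    ultimately have "b2 \<in> span B1"
      using b(1) s subspace_diff[OF S] B1 by (metis IntI add_diff_cancel_right' subsetD)
    then have "g b2 = b2" and "g b3 = b3"
      using b(3) g_id span_mono[of B1 "B1 \<union> (B - B2)"] span_mono[of "B - B2" "B1 \<union> (B - B2)"] by auto
    then show ?thesis
      using b(1) linear_add[OF g(1)] by simp
  qed
  have "g b \<in> V" if "b \<in> B2" for b
  proof -
    have "b \<in> Bf"
      using that B(1) Bf(1) by blast
    then show ?thesis
      using that g(2) B1 B2 subspace_0[OF V] by (auto simp: f_def)
  qed
  then have "g ` B2 \<subseteq> V"
    by blast
  then have gV: "g v \<in> V" if "v \<in> V" for v
    using span_minimal[OF _ V] linear_span_image[OF g(1), of B2] B2(4) that by blast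
  have Q: "matrix g *v x = g x" for x
    using matrix_vector_mul(2)[OF g(1)] by metis
  show ?thesis
  proof (rule that)
    show "P ** matrix g = matrix g"
      using gS by (simp add: matrix_eq Q S_def flip: matrix_vector_mul_assoc)
    have "P *v (P *v x) = P *v x" for x
      by (simp add: matrix_vector_mul_assoc idem)
    then show "matrix g ** P = P"
      using g_id_S by (simp add: matrix_eq Q S_def flip: matrix_vector_mul_assoc)
  qed (simp add: Q gV)
qed

lemma contracting_onI:
  assumes "0 < K" "0 < \<alpha>"
    and "\<And>m n. m \<in> I \<Longrightarrow> n \<in> I \<Longrightarrow> n \<le> m \<Longrightarrow> \<bar>prod q {n..<m}\<bar> \<le> K * exp (- \<alpha> * real_of_int (m - n))"
  shows "contracting_on I q"
  unfolding contracting_on_def using assms by blast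

lemma norm_matrix_mult3_le:
  fixes A B C :: "real^'n^'n"
  shows "norm (A ** B ** C) \<le> norm A * norm B * norm C"
proof -
  have "norm (A ** B ** C) \<le> norm (A ** B) * norm C"
    by (rule norm_matrix_mult_le)
  also have "\<dots> \<le> norm A * norm B * norm C"
    by (intro mult_right_mono norm_matrix_mult_le norm_ge_zero)
  finally show ?thesis .
qed

text \<open>Transporting an adapted projection at time \<open>0\<close> along the flow keeps it adapted; it stays
  bounded for \<open>n \<ge> 0\<close> because \<open>Q n - P n = \<Phi>(n,0) P 0 (Q 0 - P 0) (1 - P 0) \<Phi>(0,n)\<close> and
  both outer factors are bounded by the dichotomy estimates.\<close>

lemma dichotomy_adapted_projections:
  fixes M P :: "int \<Rightarrow> real^'n^'n"
  assumes inv: "\<And>n. invertible (M n)"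
    and idem: "\<And>n. P n ** P n = P n" and com: "\<And>m n. P m ** evol M m n = evol M m n ** P n"
    and stable: "\<And>n. 0 \<le> n \<Longrightarrow> norm (evol M n 0 ** P 0) \<le> K"
    and unstable: "\<And>n. 0 \<le> n \<Longrightarrow> norm (evol M 0 n ** (mat 1 - P n)) \<le> K"
    and bounded: "\<And>n. norm (P n) \<le> K"
    and V: "subspace V" "\<And>m n v. v \<in> V \<Longrightarrow> evol M m n *v v \<in> V"
  obtains Q L where "\<And>n. P n ** Q n = Q n" and "\<And>n. Q n ** P n = P n"
    and "\<And>m n. Q m ** evol M m n = evol M m n ** Q n" and "\<And>n v. v \<in> V \<Longrightarrow> Q n *v v \<in> V"
    and "\<And>n. 0 \<le> n \<Longrightarrow> norm (Q n) \<le> L"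
proof -
  let ?\<Phi> = "evol M"
  obtain Q0 where Q0: "P 0 ** Q0 = Q0" "Q0 ** P 0 = P 0" "\<And>v. v \<in> V \<Longrightarrow> Q0 *v v \<in> V"
    using projection_adapted_to_subspace[OF idem V(1)] by blast
  define Q where "Q n = ?\<Phi> n 0 ** (Q0 ** ?\<Phi> 0 n)" for n
  have cocycle: "?\<Phi> m k ** ?\<Phi> k n = ?\<Phi> m n" and cocycle': "?\<Phi> m k ** (?\<Phi> k n ** X) = ?\<Phi> m n ** X"
    for m k n and X :: "real^'n^'n"
    by (simp_all add: evol_cocycle[OF inv] matrix_mul_assoc)
  have com': "P m ** (?\<Phi> m n ** X) = ?\<Phi> m n ** (P n ** X)" for m n and X :: "real^'n^'n"
    by (simp add: com matrix_mul_assoc)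
  have P: "P n = ?\<Phi> n 0 ** (P 0 ** ?\<Phi> 0 n)" for n
    using com'[of n 0 "?\<Phi> 0 n"] by (simp add: cocycle)
  have unstable_com: "(mat 1 - P m) ** ?\<Phi> m n = ?\<Phi> m n ** (mat 1 - P n)" for m n
    by (simp add: matrix_mult_diff_distrib com)
  show ?thesis
  proof (rule that)
    show "P n ** Q n = Q n" for n
      unfolding Q_def by (simp add: com' matrix_mul_assoc[of "P 0"] Q0(1))
    show "Q n ** P n = P n" for n
    proof -
      have "Q n ** P n = ?\<Phi> n 0 ** (Q0 ** (?\<Phi> 0 n ** P n))"
        by (simp add: Q_def matrix_mul_assoc)
      also have "?\<Phi> 0 n ** P n = P 0 ** ?\<Phi> 0 n"
        by (simp add: com)
      finally show ?thesis
        by (simp add: matrix_mul_assoc Q0(2) P[of n])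
    qed
    show "Q m ** ?\<Phi> m n = ?\<Phi> m n ** Q n" for m n
      unfolding Q_def by (simp add: cocycle cocycle' flip: matrix_mul_assoc)
    show "Q n *v v \<in> V" if "v \<in> V" for n v
      unfolding Q_def using that by (simp add: V(2) Q0(3) flip: matrix_vector_mul_assoc)
    show "norm (Q n) \<le> K + K * norm (Q0 - P 0) * K" if "0 \<le> n" for n
    proof -
      have D: "Q0 - P 0 = P 0 ** ((Q0 - P 0) ** (mat 1 - P 0))"
        by (simp add: matrix_mult_diff_distrib Q0(1,2) idem)
      have "Q n - P n = ?\<Phi> n 0 ** ((Q0 - P 0) ** ?\<Phi> 0 n)"
        by (simp add: Q_def P[of n] matrix_mult_diff_distrib)
      also have "\<dots> = ?\<Phi> n 0 ** (P 0 ** ((Q0 - P 0) ** ((mat 1 - P 0) ** ?\<Phi> 0 n)))"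
        by (subst D) (simp add: matrix_mul_assoc)
      also have "\<dots> = (?\<Phi> n 0 ** P 0) ** (Q0 - P 0) ** (?\<Phi> 0 n ** (mat 1 - P n))"
        by (simp add: unstable_com matrix_mul_assoc)
      finally have "norm (Q n - P n)
          \<le> norm (?\<Phi> n 0 ** P 0) * norm (Q0 - P 0) * norm (?\<Phi> 0 n ** (mat 1 - P n))"
        using norm_matrix_mult3_le by simp
      also have "\<dots> \<le> K * norm (Q0 - P 0) * K"
      proof -
        have "0 \<le> K"
          using bounded[of 0] norm_ge_zero order_trans by blast
        then show ?thesis
          using stable[OF that] unstable[OF that] by (intro mult_mono) auto
      qed
      finally show ?thesis
        using bounded[of n] norm_triangle_ineq[of "P n" "Q n - P n"] by simp
    qed
  qed
qed

definition vanishing_coords :: "'d set \<Rightarrow> (real^'d) set" where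
  "vanishing_coords U = {x. \<forall>l\<in>U. x $ l = 0}"

lemma subspace_vanishing_coords: "subspace (vanishing_coords U)"
  by (auto simp: subspace_def vanishing_coords_def)

lemma upper_triangular_vanishing_coords:
  fixes A :: "real^'d::{finite,linorder}^'d::{finite,linorder}"
  assumes "upper_triangular A" and U: "\<And>l l'. l \<in> U \<Longrightarrow> l < l' \<Longrightarrow> l' \<in> U"
    and "x \<in> vanishing_coords U"
  shows "A *v x \<in> vanishing_coords U"
  using assms(3) U by (auto simp: vanishing_coords_def upper_triangular_matrix_vector_mult_nth[OF assms(1)])

lemma upper_triangular_mult_vanishing_coords_nth:
  fixes A :: "real^'d::{finite,linorder}^'d::{finite,linorder}"
  assumes "upper_triangular A" and "x \<in> vanishing_coords {l. i < l}"
  shows "(A *v x) $ i = A $ i $ i * x $ i"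
  using assms(2) by (simp add: vanishing_coords_def upper_triangular_matrix_vector_mult_nth[OF assms(1)])

locale triangular_dichotomy =
  fixes A :: "int \<Rightarrow> real^'d::{finite,linorder}^'d::{finite,linorder}"
    and K \<alpha> :: real and P :: "int \<Rightarrow> real^'d::{finite,linorder}^'d::{finite,linorder}"
  assumes triangular: "\<And>n. upper_triangular (A n)"
    and diag_nonzero: "\<And>n i. A n $ i $ i \<noteq> 0"
    and pos: "0 < K" "0 < \<alpha>"
    and idem: "\<And>n. P n ** P n = P n"
    and com: "\<And>m n. P m ** evol A m n = evol A m n ** P n"
    and stable: "\<And>m n. n \<le> m \<Longrightarrow> norm (evol A m n ** P n) \<le> K * exp (- \<alpha> * real_of_int (m - n))"
    and unstable: "\<And>m n. m \<le> n \<Longrightarrow> norm (evol A m n ** (mat 1 - P n)) \<le> K * exp (\<alpha> * real_of_int (m - n))"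
begin

abbreviation "\<Phi> \<equiv> evol A"

lemma invertible: "invertible (A n)"
  by (rule upper_triangular_invertible[OF triangular diag_nonzero])

lemma evol_vanishing_coords:
  assumes "\<And>l l'. l \<in> U \<Longrightarrow> l < l' \<Longrightarrow> l' \<in> U" and "x \<in> vanishing_coords U"
  shows "\<Phi> m n *v x \<in> vanishing_coords U"
proof (rule upper_triangular_vanishing_coords[OF _ assms])
  show "upper_triangular (\<Phi> m n)"
    using upper_triangular_evol[of A, OF triangular diag_nonzero] by blast
qed

lemma evol_nth:
  assumes "x \<in> vanishing_coords {l. i < l}"
  shows "(\<Phi> m n *v x) $ i = scalar_evol (\<lambda>l. A l $ i $ i) m n * x $ i"
proof -
  have "upper_triangular (\<Phi> m n)" and "\<Phi> m n $ i $ i = scalar_evol (\<lambda>l. A l $ i $ i) m n"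
    using upper_triangular_evol[of A, OF triangular diag_nonzero] by blast+
  then show ?thesis
    using upper_triangular_mult_vanishing_coords_nth[OF _ assms] by simp
qed

lemma adapted_projections:
  assumes "\<And>l l'. l \<in> U \<Longrightarrow> l < l' \<Longrightarrow> l' \<in> U"
  obtains Q L where "\<And>n. P n ** Q n = Q n" and "\<And>n. Q n ** P n = P n"
    and "\<And>m n. Q m ** \<Phi> m n = \<Phi> m n ** Q n"
    and "\<And>n v. v \<in> vanishing_coords U \<Longrightarrow> Q n *v v \<in> vanishing_coords U"
    and "\<And>n. 0 \<le> n \<Longrightarrow> norm (Q n) \<le> L"
proof -
  have decay_le: "K * exp (- \<alpha> * real_of_int k) \<le> K" if "0 \<le> k" for k
    using pos that by (simp add: mult_left_le)
  have stable0: "norm (\<Phi> n 0 ** P 0) \<le> K" if "0 \<le> n" for n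
    using stable[of 0 n] decay_le[of n] that by simp
  have unstable0: "norm (\<Phi> 0 n ** (mat 1 - P n)) \<le> K" if "0 \<le> n" for n
    using unstable[of 0 n] decay_le[of n] that by simp
  have bounded: "norm (P n) \<le> K" for n
    using stable[of n n] by simp
  have invariant: "\<Phi> m n *v v \<in> vanishing_coords U" if "v \<in> vanishing_coords U" for m n v
    using assms that by (rule evol_vanishing_coords)
  show ?thesis
    using invertible idem com stable0 unstable0 bounded subspace_vanishing_coords invariant
    by (rule dichotomy_adapted_projections) (assumption+, rule that)
qed

lemma diagonal_contracting:
  assumes s: "s \<in> vanishing_coords {l. i < l}" "P 0 *v s = s" "s $ i \<noteq> 0"
  shows "contracting_on {0..} (\<lambda>n. A n $ i $ i)"
proof -
  let ?q = "\<lambda>n. A n $ i $ i" and ?V = "vanishing_coords {l. i < l}" and ?W = "vanishing_coords {l. i \<le> l}"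
  let ?e = "axis i (1::real)"
  obtain Q L where PQ: "\<And>n. P n ** Q n = Q n" and QP: "\<And>n. Q n ** P n = P n"
    and "\<And>m n. Q m ** \<Phi> m n = \<Phi> m n ** Q n" and QW: "\<And>n v. v \<in> ?W \<Longrightarrow> Q n *v v \<in> ?W"
    and L: "\<And>n. 0 \<le> n \<Longrightarrow> norm (Q n) \<le> L"
  proof (rule adapted_projections)
    show "l' \<in> {l. i \<le> l}" if "l \<in> {l. i \<le> l}" "l < l'" for l l'
      using that by simp
  qed blast
  have x: "Q n *v ?e \<in> ?V \<and> (Q n *v ?e) $ i = 1 \<and> P n *v (Q n *v ?e) = Q n *v ?e" for n
  proof -
    define s' where "s' = \<Phi> n 0 *v s"
    have s'V: "s' \<in> ?V"
      unfolding s'_def by (rule evol_vanishing_coords[OF _ s(1)]) auto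
    have s'i: "s' $ i \<noteq> 0"
      using evol_nth[OF s(1), of n 0] s(3) scalar_evol_nonzero[of ?q n 0] diag_nonzero
      by (simp add: s'_def)
    have "P n *v s' = (P n ** \<Phi> n 0) *v s"
      by (simp add: s'_def matrix_vector_mul_assoc)
    also have "\<dots> = \<Phi> n 0 *v (P 0 *v s)"
      by (simp add: com matrix_vector_mul_assoc)
    finally have Ps': "P n *v s' = s'"
      by (simp add: s(2) s'_def)
    have Qs': "Q n *v s' = s'"
      using Ps' QP[of n] by (metis matrix_vector_mul_assoc)
    define w where "w = ?e - (1 / s' $ i) *\<^sub>R s'"
    have "w \<in> ?W"
      using s'V s'i by (auto simp: w_def vanishing_coords_def axis_def order.order_iff_strict)
    then have Qw: "Q n *v w \<in> ?W"
      by (rule QW)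
    have Qe: "Q n *v ?e = (1 / s' $ i) *\<^sub>R s' + Q n *v w"
      by (simp add: w_def matrix_vector_mult_diff_distrib matrix_vector_mult_scaleR Qs')
    have "Q n *v ?e \<in> ?V"
      using s'V Qw unfolding Qe by (auto simp: vanishing_coords_def)
    moreover have "(Q n *v ?e) $ i = 1"
      using Qw s'i unfolding Qe by (simp add: vanishing_coords_def)
    moreover have "P n *v (Q n *v ?e) = Q n *v ?e"
      by (simp add: matrix_vector_mul_assoc PQ)
    ultimately show ?thesis
      by blast
  qed
  have L0: "0 \<le> L"
    using L[of 0] norm_ge_zero[of "Q 0"] by linarith
  have bound: "\<bar>prod ?q {n..<m}\<bar> \<le> (K * (L + 1)) * exp (- \<alpha> * real_of_int (m - n))"
    if "0 \<le> n" "n \<le> m" for m n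
  proof -
    have stable_x: "\<Phi> m n *v (Q n *v ?e) = (\<Phi> m n ** P n) *v (Q n *v ?e)"
      using x[of n] by (simp flip: matrix_vector_mul_assoc)
    have "\<bar>prod ?q {n..<m}\<bar> = \<bar>(\<Phi> m n *v (Q n *v ?e)) $ i\<bar>"
      using evol_nth[of "Q n *v ?e" i m n] x[of n] that by (simp add: scalar_evol_def)
    also have "\<dots> \<le> norm ((\<Phi> m n ** P n) *v (Q n *v ?e))"
      unfolding stable_x by (rule component_le_norm_cart)
    also have "\<dots> \<le> norm (\<Phi> m n ** P n) * norm (Q n *v ?e)"
      by (rule norm_matrix_vector_mult_le)
    also have "\<dots> \<le> K * exp (- \<alpha> * real_of_int (m - n)) * (L + 1)"
    proof (rule mult_mono)
      show "norm (Q n *v ?e) \<le> L + 1"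
        using norm_matrix_vector_mult_le[of "Q n" ?e] L[OF that(1)] by simp
    qed (use stable[OF that(2)] pos in simp_all)
    finally show ?thesis
      by (simp add: ac_simps)
  qed
  show ?thesis
    by (rule contracting_onI[of "K * (L + 1)" \<alpha>]) (use pos L0 bound in auto)
qed

lemma diagonal_expanding:
  assumes no_stable: "\<And>s. s \<in> vanishing_coords {l. i < l} \<Longrightarrow> P 0 *v s = s \<Longrightarrow> s $ i = 0"
  shows "expanding_on {0..} (\<lambda>n. A n $ i $ i)"
proof -
  let ?q = "\<lambda>n. A n $ i $ i" and ?V = "vanishing_coords {l. i < l}"
  let ?e = "axis i (1::real)"
  obtain Q L where PQ: "\<And>n. P n ** Q n = Q n" and QP: "\<And>n. Q n ** P n = P n"
    and comQ: "\<And>m n. Q m ** \<Phi> m n = \<Phi> m n ** Q n" and QV: "\<And>n v. v \<in> ?V \<Longrightarrow> Q n *v v \<in> ?V"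
    and L: "\<And>n. 0 \<le> n \<Longrightarrow> norm (Q n) \<le> L"
  proof (rule adapted_projections)
    show "l' \<in> {l. i < l}" if "l \<in> {l. i < l}" "l < l'" for l l'
      using that by simp
  qed blast
  have eV: "?e \<in> ?V"
    by (simp add: vanishing_coords_def axis_def)
  have Qe: "(Q n *v ?e) $ i = 0" for n
  proof -
    have QeV: "Q n *v ?e \<in> ?V"
      using QV[OF eV] .
    define y where "y = \<Phi> 0 n *v (Q n *v ?e)"
    have yV: "y \<in> ?V"
      unfolding y_def by (rule evol_vanishing_coords[OF _ QeV]) auto
    have "P 0 *v y = (P 0 ** \<Phi> 0 n ** Q n) *v ?e"
      by (simp add: y_def matrix_vector_mul_assoc matrix_mul_assoc)
    also have "\<dots> = y"
      by (simp add: y_def com PQ matrix_vector_mul_assoc flip: matrix_mul_assoc)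
    finally have "y $ i = 0"
      using no_stable[OF yV] by blast
    moreover have "\<Phi> n 0 *v y = Q n *v ?e"
      by (simp add: y_def matrix_vector_mul_assoc matrix_mul_assoc evol_cocycle[OF invertible])
    ultimately show ?thesis
      using evol_nth[OF yV, of n 0] by simp
  qed
  have L0: "0 \<le> L"
    using L[of 0] norm_ge_zero[of "Q 0"] by linarith
  have bound: "\<bar>prod (\<lambda>n. inverse (?q n)) {m..<n}\<bar> \<le> ((norm (mat 1 :: real^'d::{finite,linorder}^'d::{finite,linorder}) + L) * K) * exp (- \<alpha> * real_of_int (n - m))"
    if "0 \<le> m" "m \<le> n" for m n
  proof -
    let ?u = "?e - Q n *v ?e"
    have uV: "?u \<in> ?V"
      using eV QV[OF eV] subspace_diff[OF subspace_vanishing_coords] by blast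
    have u_eq: "?u = (mat 1 - Q n) *v ?e"
      by (simp add: matrix_vector_mult_diff_rdistrib)
    have IQ: "mat 1 - Q n = (mat 1 - Q n) ** (mat 1 - P n)"
      by (simp add: matrix_mult_diff_distrib QP)
    have "\<Phi> m n *v ?u = (\<Phi> m n ** (mat 1 - Q n) ** (mat 1 - P n)) *v ?e"
      unfolding u_eq by (subst IQ) (simp add: matrix_vector_mul_assoc matrix_mul_assoc)
    also have "\<Phi> m n ** (mat 1 - Q n) = (mat 1 - Q m) ** \<Phi> m n"
      by (simp add: matrix_mult_diff_distrib comQ)
    finally have u: "\<Phi> m n *v ?u = ((mat 1 - Q m) ** (\<Phi> m n ** (mat 1 - P n))) *v ?e"
      by (simp add: matrix_mul_assoc)
    have "\<bar>prod (\<lambda>n. inverse (?q n)) {m..<n}\<bar> = \<bar>(\<Phi> m n *v ?u) $ i\<bar>"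
      using evol_nth[OF uV, of m n] Qe[of n] that by (cases "m = n") (auto simp: scalar_evol_def prod_inverse_int)
    also have "\<dots> \<le> norm ((mat 1 - Q m) ** (\<Phi> m n ** (mat 1 - P n))) * norm ?e"
      unfolding u by (rule order_trans[OF component_le_norm_cart norm_matrix_vector_mult_le])
    also have "\<dots> \<le> (norm (mat 1 :: real^'d::{finite,linorder}^'d::{finite,linorder}) + L) * (K * exp (\<alpha> * real_of_int (m - n)))"
    proof -
      have "norm (mat 1 - Q m) \<le> norm (mat 1 :: real^'d::{finite,linorder}^'d::{finite,linorder}) + L"
        using norm_triangle_ineq4[of "mat 1" "Q m"] L that by fastforce
      then show ?thesis
        using norm_matrix_mult_le[of "mat 1 - Q m" "\<Phi> m n ** (mat 1 - P n)"] unstable[OF that(2)] L0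
        by (simp add: order_trans[OF _ mult_mono])
    qed
    finally show ?thesis
      by (simp add: algebra_simps)
  qed
  show ?thesis
  proof (rule contracting_onI[of "(norm (mat 1 :: real^'d::{finite,linorder}^'d::{finite,linorder}) + L) * K" \<alpha>])
    have "(mat 1 :: real^'d::{finite,linorder}^'d::{finite,linorder}) $ i $ i = 1"
      by (simp add: mat_def)
    then have "0 < norm (mat 1 :: real^'d::{finite,linorder}^'d::{finite,linorder})"
      using abs_matrix_entry_le_norm[of "mat 1 :: real^'d::{finite,linorder}^'d::{finite,linorder}" i i]
      by linarith
    then show "0 < (norm (mat 1 :: real^'d::{finite,linorder}^'d::{finite,linorder}) + L) * K"
      using L0 pos by (intro mult_pos_pos add_pos_nonneg)
  qed (use pos bound in auto)
qed

lemma diagonal_dichotomy_half_line: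
  "contracting_on {0..} (\<lambda>n. A n $ i $ i) \<or> expanding_on {0..} (\<lambda>n. A n $ i $ i)"
  using diagonal_contracting diagonal_expanding by blast

end

lemma has_ED_upper_triangular_diagonal:
  fixes A :: "int \<Rightarrow> real^'d::{finite,linorder}^'d::{finite,linorder}"
  assumes "\<And>n. upper_triangular (A n)" and "\<And>n i. A n $ i $ i \<noteq> 0"
    and sym: "\<And>l. A (- l) $ i $ i = A l $ i $ i" and "has_ED A"
  shows "contracting_on UNIV (\<lambda>n. A n $ i $ i) \<or> expanding_on UNIV (\<lambda>n. A n $ i $ i)"
proof -
  obtain K \<alpha> P where "triangular_dichotomy A K \<alpha> P"
    using \<open>has_ED A\<close> by (rule has_EDE) (use assms(1,2) in \<open>blast intro: triangular_dichotomy.intro\<close>)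
  then have "contracting_on {0..} (\<lambda>n. A n $ i $ i) \<or> expanding_on {0..} (\<lambda>n. A n $ i $ i)"
    by (rule triangular_dichotomy.diagonal_dichotomy_half_line)
  then show ?thesis
    using contracting_on_symmetric_extension[of "\<lambda>n. A n $ i $ i"]
      contracting_on_symmetric_extension[of "\<lambda>n. inverse (A n $ i $ i)"] sym by auto
qed

lemma has_ED_similar:
  fixes A B T T' :: "int \<Rightarrow> real^'n^'n"
  assumes invA: "\<And>n. invertible (A n)" and invB: "\<And>n. invertible (B n)"
    and T: "\<And>n. T n ** T' n = mat 1" "\<And>n. T' n ** T n = mat 1"
    and similar: "\<And>n. A n ** T n = T (n + 1) ** B n"
    and bounded: "\<And>n. norm (T n) \<le> c" "\<And>n. norm (T' n) \<le> c"
    and "has_ED B"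
  shows "has_ED A"
proof -
  obtain K \<alpha> P where K: "0 < K" "0 < \<alpha>" and idem: "\<And>n. P n ** P n = P n"
    and com: "\<And>m n. P m ** evol B m n = evol B m n ** P n"
    and stable: "\<And>m n. n \<le> m \<Longrightarrow> norm (evol B m n ** P n) \<le> K * exp (- \<alpha> * real_of_int (m - n))"
    and unstable: "\<And>m n. m \<le> n \<Longrightarrow> norm (evol B m n ** (mat 1 - P n)) \<le> K * exp (\<alpha> * real_of_int (m - n))"
    using \<open>has_ED B\<close> by (rule has_EDE) blast
  have evol: "evol A m n = T m ** evol B m n ** T' n" for m n
    using arg_cong[OF evol_similar[of A B T, OF invA invB similar, of m n], of "\<lambda>X. X ** T' n"]
    by (simp add: T(1) flip: matrix_mul_assoc)
  have conj: "T m ** X ** T' n ** (T n ** Y ** T' k) = T m ** (X ** Y) ** T' k" for m n k X Y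
    by (simp add: matrix_mul_assoc) (simp add: T(2) flip: matrix_mul_assoc)
  have c: "0 \<le> c"
    using bounded(1)[of 0] norm_ge_zero order_trans by blast
  have norm_conj: "norm (T m ** X ** T' n) \<le> c * c * norm X" for m n X
  proof -
    have "norm (T m) * norm X * norm (T' n) \<le> c * norm X * c"
      using bounded c by (intro mult_mono) auto
    then show ?thesis
      using norm_matrix_mult3_le[of "T m" X "T' n"] by (simp add: ac_simps)
  qed
  have weaken: "c * c * a \<le> (c * c * K + K) * e" if "a \<le> K * e" "0 \<le> e" for a e
  proof -
    have "c * c * a \<le> c * c * (K * e)"
      using that c by (simp add: mult_left_mono)
    also have "\<dots> \<le> (c * c * K + K) * e"
      using that K by (simp add: algebra_simps)
    finally show ?thesis .
  qed
  define P' where "P' n = T n ** P n ** T' n" for n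
  have I: "mat 1 - P' n = T n ** (mat 1 - P n) ** T' n" for n
    by (simp add: P'_def matrix_mult_diff_distrib T(1))
  show ?thesis
  proof (rule has_EDI[of "c * c * K + K" \<alpha> P'])
    show "0 < c * c * K + K"
      using K by (simp add: add_nonneg_pos)
    show "P' n ** P' n = P' n" for n
      unfolding P'_def conj idem ..
    show "P' m ** evol A m n = evol A m n ** P' n" for m n
      unfolding P'_def evol conj com ..
    show "norm (evol A m n ** P' n) \<le> (c * c * K + K) * exp (- \<alpha> * real_of_int (m - n))" if "n \<le> m" for m n
      using norm_conj[of m "evol B m n ** P n" n] weaken[OF stable[OF that]]
      unfolding P'_def evol conj by (meson exp_ge_zero order_trans)
    show "norm (evol A m n ** (mat 1 - P' n)) \<le> (c * c * K + K) * exp (\<alpha> * real_of_int (m - n))" if "m \<le> n" for m n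
      using norm_conj[of m "evol B m n ** (mat 1 - P n)" n] weaken[OF unstable[OF that]]
      unfolding I evol conj by (meson exp_ge_zero order_trans)
  qed (use K in simp)
qed

definition transvection :: "'d \<Rightarrow> 'd \<Rightarrow> real \<Rightarrow> real^'d^'d" where
  "transvection j k c = (\<chi> a b. (if a = b then 1 else 0) + (if a = j \<and> b = k then c else 0))"

lemma transvection_mult_nth:
  "(transvection j k c ** M) $ a $ b = M $ a $ b + (if a = j then c * M $ k $ b else 0)"
proof -
  have "(transvection j k c ** M) $ a $ b
      = (\<Sum>d\<in>UNIV. (if d = a then M $ d $ b else 0) + (if a = j \<and> d = k then c * M $ d $ b else 0))"
    unfolding matrix_matrix_mult_def vec_lambda_beta
    by (rule sum.cong) (auto simp: transvection_def algebra_simps)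
  also have "\<dots> = M $ a $ b + (if a = j then c * M $ k $ b else 0)"
    by (cases "a = j") (simp_all add: sum.distrib)
  finally show ?thesis .
qed

lemma mult_transvection_nth:
  "(M ** transvection j k c) $ a $ b = M $ a $ b + (if b = k then c * M $ a $ j else 0)"
proof -
  have "(M ** transvection j k c) $ a $ b
      = (\<Sum>d\<in>UNIV. (if d = b then M $ a $ d else 0) + (if d = j \<and> b = k then c * M $ a $ d else 0))"
    unfolding matrix_matrix_mult_def vec_lambda_beta
    by (rule sum.cong) (auto simp: transvection_def algebra_simps)
  also have "\<dots> = M $ a $ b + (if b = k then c * M $ a $ j else 0)"
    by (cases "b = k") (simp_all add: sum.distrib)
  finally show ?thesis .
qed

lemma transvection_inverse:
  fixes j k :: "'d::finite"
  assumes "j \<noteq> k"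
  shows "transvection j k c ** transvection j k (- c) = mat 1"
proof -
  have "(transvection j k c ** transvection j k (- c)) $ a $ b = (mat 1 :: real^'d^'d) $ a $ b" for a b
    unfolding transvection_mult_nth using assms by (simp add: transvection_def mat_def)
  then show ?thesis
    by (simp add: vec_eq_iff)
qed

lemma norm_transvection_le:
  fixes j k :: "'d::finite"
  assumes "\<bar>c\<bar> \<le> C"
  shows "norm (transvection j k c) \<le> real CARD('d) * real CARD('d) * (1 + C)"
proof -
  have "\<bar>transvection j k c $ a $ b\<bar> \<le> 1 + C" for a b
    using abs_triangle_ineq[of 1 c] assms by (auto simp: transvection_def)
  then show ?thesis
    by (rule norm_matrix_le_entrywise)
qed

lemma ratio_dichotomy:
  assumes "(contracting_on I p \<and> expanding_on I q) \<or> (expanding_on I p \<and> contracting_on I q)"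
  shows "contracting_on I (\<lambda>n. p n / q n) \<or> expanding_on I (\<lambda>n. p n / q n)"
  using assms contracting_on_mult[of I p "\<lambda>n. inverse (q n)"] contracting_on_mult[of I "\<lambda>n. inverse (p n)" q]
  by (auto simp: divide_inverse mult.commute)

text \<open>A bounded change of variables by the transvection \<open>1 + t n E\<^sub>j\<^sub>k\<close> removes the entry \<open>(j, k)\<close>
  of a triangular system; the required sequence \<open>t\<close> is a bounded solution of a scalar equation
  whose coefficient \<open>A n $ j $ j / A n $ k $ k\<close> is dichotomic.\<close>

lemma eliminate_entry:
  fixes A :: "int \<Rightarrow> real^'d::{finite,linorder}^'d::{finite,linorder}"
  assumes ut: "\<And>n. upper_triangular (A n)" and nz: "\<And>n i. A n $ i $ i \<noteq> 0"
    and bounded: "\<And>n a b. \<bar>A n $ a $ b\<bar> \<le> c" and inv_bounded: "\<And>n i. \<bar>inverse (A n $ i $ i)\<bar> \<le> c'"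
    and "j < k"
    and dich: "contracting_on UNIV (\<lambda>n. A n $ j $ j / A n $ k $ k) \<or> expanding_on UNIV (\<lambda>n. A n $ j $ j / A n $ k $ k)"
  obtains B c'' where "\<And>n. upper_triangular (B n)" and "\<And>n i. B n $ i $ i = A n $ i $ i"
    and "\<And>n a b. \<bar>B n $ a $ b\<bar> \<le> c''" and "\<And>n. B n $ j $ k = 0"
    and "\<And>n a b. B n $ a $ b \<noteq> A n $ a $ b \<Longrightarrow> (b = k \<and> a < j) \<or> (a = j \<and> k < b) \<or> (a = j \<and> b = k)"
    and "has_ED B \<Longrightarrow> has_ED A"
proof -
  have c: "0 \<le> c" "0 \<le> c'"
    using bounded[of 0 j j] inv_bounded[of 0 j] by linarith+
  have kj: "A n $ k $ j = 0" for n
    using ut \<open>j < k\<close> by (simp add: upper_triangular_def)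
  have "j \<noteq> k"
    using \<open>j < k\<close> by simp
  obtain t Bt where t: "\<And>n. t (n + 1) = A n $ j $ j / A n $ k $ k * t n + A n $ j $ k * inverse (A n $ k $ k)"
    and Bt: "\<And>n. \<bar>t n\<bar> \<le> Bt"
  proof (rule bounded_solution[where f = "\<lambda>n. A n $ j $ k * inverse (A n $ k $ k)" and F = "c * c'", OF _ dich])
    show "A n $ j $ j / A n $ k $ k \<noteq> 0" for n
      using nz by simp
    show "\<bar>A n $ j $ k * inverse (A n $ k $ k)\<bar> \<le> c * c'" for n
      unfolding abs_mult using bounded inv_bounded c by (intro mult_mono) auto
  qed blast
  define B where "B n = (\<chi> a b. A n $ a $ b + (if b = k then t n * A n $ a $ j else 0)
                                 - (if a = j then t (n + 1) * A n $ k $ b else 0))" for n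
  have B: "B n $ a $ b = A n $ a $ b + (if b = k then t n * A n $ a $ j else 0)
                         - (if a = j then t (n + 1) * A n $ k $ b else 0)" for n a b
    by (simp add: B_def)
  have utB: "upper_triangular (B n)" for n
    using ut \<open>j < k\<close> by (auto simp: upper_triangular_def B dest: less_trans)
  have diagB: "B n $ i $ i = A n $ i $ i" for n i
    using kj \<open>j \<noteq> k\<close> by (auto simp: B)
  have Bt0: "0 \<le> Bt"
    using Bt[of 0] by linarith
  have similar: "A n ** transvection j k (t n) = transvection j k (t (n + 1)) ** B n" for n
    using kj \<open>j \<noteq> k\<close> by (simp add: vec_eq_iff transvection_mult_nth mult_transvection_nth B)
  show ?thesis
  proof (rule that)
    show "upper_triangular (B n)" for n
      by (rule utB)
    show "B n $ i $ i = A n $ i $ i" for n i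
      by (rule diagB)
    have tA: "\<bar>t m * A n $ a $ b\<bar> \<le> Bt * c" for m n a b
      unfolding abs_mult using Bt bounded Bt0 by (intro mult_mono) auto
    show "\<bar>B n $ a $ b\<bar> \<le> c + Bt * c + Bt * c" for n a b
      unfolding B using bounded[of n a b] tA[of n n a j] tA[of "n + 1" n k b] by (auto simp: abs_le_iff)
    show "B n $ j $ k = 0" for n
      using t[of n] nz[of n k] \<open>j < k\<close> by (simp add: B field_simps)
    show "(b = k \<and> a < j) \<or> (a = j \<and> k < b) \<or> (a = j \<and> b = k)" if "B n $ a $ b \<noteq> A n $ a $ b" for n a b
      using that ut by (auto simp: B upper_triangular_def split: if_splits) (meson not_less_iff_gr_or_eq)+
    show "has_ED A" if "has_ED B"
    proof (rule has_ED_similar[OF _ _ _ _ similar _ _ that])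
      show "invertible (A n)" for n
        by (rule upper_triangular_invertible[OF ut nz])
      show "invertible (B n)" for n
        using upper_triangular_invertible[OF utB] nz by (simp add: diagB)
      show "transvection j k (t n) ** transvection j k (- t n) = mat 1" for n
        by (rule transvection_inverse[OF \<open>j \<noteq> k\<close>])
      show "transvection j k (- t n) ** transvection j k (t n) = mat 1" for n
        using transvection_inverse[OF \<open>j \<noteq> k\<close>, of "- t n"] by simp
      show "norm (transvection j k (t n)) \<le> real CARD('d) * real CARD('d) * (1 + Bt)" for n
        using Bt[of n] by (rule norm_transvection_le)
      show "norm (transvection j k (- t n)) \<le> real CARD('d) * real CARD('d) * (1 + Bt)" for n
        using Bt[of n] by (intro norm_transvection_le) simp
    qed
  qed
qed

lemma recursion_variation_of_constants:
  fixes y a g :: "nat \<Rightarrow> real"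
  assumes "\<And>k. y (Suc k) = a k * y k + g k"
  shows "y k = prod a {0..<k} * y 0 + (\<Sum>s<k. prod a {Suc s..<k} * g s)"
proof (induction k)
  case (Suc k)
  have "(\<Sum>s<Suc k. prod a {Suc s..<Suc k} * g s) = a k * (\<Sum>s<k. prod a {Suc s..<k} * g s) + g k"
    by (simp add: sum_distrib_left prod.atLeastLessThan_Suc algebra_simps)
  then show ?case
    using assms[of k] Suc by (simp add: prod.atLeastLessThan_Suc algebra_simps)
qed simp

lemma sum_power_convolution_le:
  fixes x :: real
  assumes x: "0 < x" "x < 1"
  shows "(\<Sum>s<k. x ^ (2 * (k - Suc s)) * x ^ s) \<le> x ^ k / (x * (1 - x))"
proof -
  have "x ^ (2 * (k - Suc s)) * x ^ s = x ^ k / x * x ^ (k - Suc s)" if "s < k" for s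
  proof -
    have "2 * (k - Suc s) + s + 1 = k + (k - Suc s)"
      using that by simp
    then have "x ^ (2 * (k - Suc s)) * x ^ s * x = x ^ k * x ^ (k - Suc s)"
      by (metis power_add power_one_right)
    then show ?thesis
      using x by (simp add: field_simps)
  qed
  then have "(\<Sum>s<k. x ^ (2 * (k - Suc s)) * x ^ s) = x ^ k / x * (\<Sum>s<k. x ^ (k - Suc s))"
    by (simp add: sum_distrib_left)
  also have "(\<Sum>s<k. x ^ (k - Suc s)) = (1 - x ^ k) / (1 - x)"
    using x by (simp add: sum.nat_diff_reindex sum_gp_strict)
  also have "x ^ k / x * ((1 - x ^ k) / (1 - x)) \<le> x ^ k / x * (1 / (1 - x))"
    using x by (intro mult_left_mono divide_right_mono) auto
  finally show ?thesis
    by simp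
qed

lemma scalar_recursion_decay:
  fixes y a :: "nat \<Rightarrow> real"
  assumes x: "0 < x" "x < 1" and K: "0 \<le> K"
    and a: "\<And>s k. s \<le> k \<Longrightarrow> \<bar>prod a {s..<k}\<bar> \<le> K * x ^ (2 * (k - s))"
    and y: "\<And>k. \<bar>y (Suc k) - a k * y k\<bar> \<le> G * x ^ k"
  shows "\<bar>y k\<bar> \<le> (K * \<bar>y 0\<bar> + K * G / (x * (1 - x))) * x ^ k"
proof -
  define g where "g k = y (Suc k) - a k * y k" for k
  have G: "0 \<le> G"
    using y[of 0] by simp
  have "\<bar>y k\<bar> \<le> \<bar>prod a {0..<k}\<bar> * \<bar>y 0\<bar> + (\<Sum>s<k. \<bar>prod a {Suc s..<k}\<bar> * \<bar>g s\<bar>)"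
    using recursion_variation_of_constants[of y a g k]
    by (simp add: g_def abs_mult order_trans[OF abs_triangle_ineq add_left_mono[OF sum_abs]]
        flip: abs_mult)
  also have "\<dots> \<le> K * x ^ (2 * k) * \<bar>y 0\<bar> + (\<Sum>s<k. K * x ^ (2 * (k - Suc s)) * (G * x ^ s))"
    using a a[of 0 k] y x K by (intro add_mono sum_mono mult_mono) (auto simp: g_def)
  also have "\<dots> \<le> K * x ^ k * \<bar>y 0\<bar> + K * G * (x ^ k / (x * (1 - x)))"
  proof (intro add_mono)
    show "K * x ^ (2 * k) * \<bar>y 0\<bar> \<le> K * x ^ k * \<bar>y 0\<bar>"
      using x K by (intro mult_right_mono mult_left_mono power_decreasing) auto
    have "(\<Sum>s<k. K * x ^ (2 * (k - Suc s)) * (G * x ^ s)) = K * G * (\<Sum>s<k. x ^ (2 * (k - Suc s)) * x ^ s)"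
      by (simp add: sum_distrib_left ac_simps)
    also have "\<dots> \<le> K * G * (x ^ k / (x * (1 - x)))"
      using K G x by (intro mult_left_mono sum_power_convolution_le) auto
    finally show "(\<Sum>s<k. K * x ^ (2 * (k - Suc s)) * (G * x ^ s)) \<le> K * G * (x ^ k / (x * (1 - x)))" .
  qed
  finally show ?thesis
    by (simp add: algebra_simps)
qed

text \<open>Downward induction over the coordinates: coordinate \<open>i\<close> obeys a contracting scalar recursion
  forced by the coordinates above it, which are already known to decay.  Halving the rate
  (\<open>x\<^sup>2\<close> for the products, \<open>x\<close> for the result) makes the convolution sums geometric.\<close>

lemma triangular_recursion_decay:
  fixes z :: "nat \<Rightarrow> real^'d::{finite,linorder}" and r :: "'d \<Rightarrow> nat \<Rightarrow> real"
  assumes x: "0 < x" "x < 1" and K: "0 \<le> K" and C: "0 \<le> C"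
    and r: "\<And>i s k. i \<in> S \<Longrightarrow> s \<le> k \<Longrightarrow> \<bar>prod (r i) {s..<k}\<bar> \<le> K * x ^ (2 * (k - s))"
    and outside: "\<And>i k. i \<notin> S \<Longrightarrow> z k $ i = 0"
    and rec: "\<And>i k. i \<in> S \<Longrightarrow>
      \<bar>z (Suc k) $ i - r i k * z k $ i\<bar> \<le> C * (\<Sum>l\<in>{l. i < l}. \<bar>z k $ l\<bar> + \<bar>z (Suc k) $ l\<bar>)"
  shows "\<bar>z k $ i\<bar> \<le> (K + 1) * (1 + 2 * K * C * CARD('d) / (x * (1 - x))) ^ CARD('d) * x ^ k * norm (z 0)"
proof -
  define D where "D = 2 * K * C * CARD('d) / (x * (1 - x))"
  define M where "M h = (K + 1) * (1 + D) ^ h" for h :: nat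
  define Z where "Z = norm (z 0)"
  have D: "0 \<le> D"
    unfolding D_def using K C x by simp
  have M_mono: "M h \<le> M h'" if "h \<le> h'" for h h'
    unfolding M_def using K D that by (intro mult_left_mono power_increasing) auto
  have M: "0 \<le> M h" for h
    unfolding M_def using K D by simp
  have Z: "0 \<le> Z" and xk: "0 \<le> x ^ k" for k
    using x by (simp_all add: Z_def)
  have main: "\<forall>k. \<bar>z k $ i\<bar> \<le> M (card {l. i \<le> l}) * x ^ k * Z" for i
  proof (induction i rule: finite_linorder_downward_induct)
    case (step i)
    show ?case
    proof (cases "i \<in> S")
      case False
      then show ?thesis
        using outside M xk Z by simp
    next
      case True
      define h where "h = card {l. i \<le> l}"
      have h: "1 \<le> h"
        unfolding h_def by (rule leI) (auto simp: card_eq_0_iff)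
      have above: "\<bar>z k $ l\<bar> \<le> M (h - 1) * x ^ k * Z" if "i < l" for k l
      proof -
        have "{l'. l \<le> l'} \<subseteq> {l'. i \<le> l'}" and "i \<in> {l'. i \<le> l'} - {l'. l \<le> l'}"
          using that by auto
        then have "{l'. l \<le> l'} \<subset> {l'. i \<le> l'}"
          by blast
        then have "card {l'. l \<le> l'} < h"
          unfolding h_def by (rule psubset_card_mono[rotated]) simp
        then have "card {l'. l \<le> l'} \<le> h - 1"
          by linarith
        then show ?thesis
          using step.IH[OF that] M_mono xk Z by (meson mult_right_mono order_trans)
      qed
      have forcing: "\<bar>z (Suc k) $ i - r i k * z k $ i\<bar> \<le> (C * CARD('d) * 2 * M (h - 1) * Z) * x ^ k" for k
      proof -
        have "M (h - 1) * x ^ Suc k * Z \<le> M (h - 1) * x ^ k * Z"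
          using x M[of "h - 1"] Z by (intro mult_right_mono mult_left_mono power_decreasing) auto
        then have "\<bar>z k $ l\<bar> + \<bar>z (Suc k) $ l\<bar> \<le> 2 * (M (h - 1) * x ^ k * Z)" if "i < l" for l
          using above[OF that, of k] above[OF that, of "Suc k"] by linarith
        then have "(\<Sum>l\<in>{l. i < l}. \<bar>z k $ l\<bar> + \<bar>z (Suc k) $ l\<bar>) \<le> card {l. i < l} * (2 * (M (h - 1) * x ^ k * Z))"
          by (intro sum_bounded_above) simp
        also have "\<dots> \<le> CARD('d) * (2 * (M (h - 1) * x ^ k * Z))"
          using M[of "h - 1"] Z xk by (intro mult_right_mono) (simp_all add: card_mono)
        finally have "C * (\<Sum>l\<in>{l. i < l}. \<bar>z k $ l\<bar> + \<bar>z (Suc k) $ l\<bar>) \<le> C * (CARD('d) * (2 * (M (h - 1) * x ^ k * Z)))"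
          using C by (rule mult_left_mono)
        then show ?thesis
          using rec[OF True, of k] by (simp add: ac_simps)
      qed
      define G where "G = C * CARD('d) * 2 * M (h - 1) * Z"
      have "K * \<bar>z 0 $ i\<bar> \<le> K * Z"
        using component_le_norm_cart[of "z 0" i] K by (simp add: Z_def mult_left_mono)
      moreover have "K * G / (x * (1 - x)) = D * M (h - 1) * Z"
        by (simp add: G_def D_def ac_simps)
      ultimately have "K * \<bar>z 0 $ i\<bar> + K * G / (x * (1 - x)) \<le> K * Z + D * M (h - 1) * Z"
        by linarith
      also have "\<dots> \<le> M h * Z"
      proof -
        have "K \<le> M (h - 1)"
          unfolding M_def using K D by (simp add: order_trans[OF _ mult_left_mono[OF one_le_power]])
        moreover have "M h = M (h - 1) + D * M (h - 1)"
          unfolding M_def using h by (cases h) (simp_all add: algebra_simps)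
        ultimately show ?thesis
          using Z by (simp add: distrib_right[symmetric] mult_right_mono)
      qed
      finally have coeff: "K * \<bar>z 0 $ i\<bar> + K * G / (x * (1 - x)) \<le> M h * Z" .
      show ?thesis
      proof
        fix k
        have "\<bar>z k $ i\<bar> \<le> (K * \<bar>z 0 $ i\<bar> + K * G / (x * (1 - x))) * x ^ k"
          unfolding G_def
          by (rule scalar_recursion_decay[where y = "\<lambda>k. z k $ i" and a = "r i"])
            (use x K r[OF True] forcing in simp_all)
        also have "\<dots> \<le> M h * Z * x ^ k"
          using coeff xk by (rule mult_right_mono)
        finally show "\<bar>z k $ i\<bar> \<le> M (card {l. i \<le> l}) * x ^ k * Z"
          by (simp add: h_def ac_simps)
      qed
    qed
  qed
  have "M (card {l. i \<le> l}) \<le> M CARD('d)"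
    by (intro M_mono card_mono) simp_all
  then show ?thesis
    using main[of i] xk Z unfolding M_def D_def Z_def
    by (meson mult_right_mono order_trans zero_le_mult_iff)
qed

lemma upper_triangular_row_bound:
  fixes A :: "real^'d::{finite,linorder}^'d::{finite,linorder}"
  assumes "upper_triangular A" and "\<And>a b. \<bar>A $ a $ b\<bar> \<le> c"
  shows "\<bar>(A *v y) $ i - A $ i $ i * y $ i\<bar> \<le> c * (\<Sum>l\<in>{l. i < l}. \<bar>y $ l\<bar>)"
proof -
  have "\<bar>(A *v y) $ i - A $ i $ i * y $ i\<bar> = \<bar>\<Sum>l\<in>{l. i < l}. A $ i $ l * y $ l\<bar>"
    by (simp add: upper_triangular_matrix_vector_mult_nth[OF assms(1)])
  also have "\<dots> \<le> (\<Sum>l\<in>{l. i < l}. c * \<bar>y $ l\<bar>)"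
    using assms(2) by (intro order_trans[OF sum_abs] sum_mono) (simp add: abs_mult mult_right_mono)
  finally show ?thesis
    by (simp add: sum_distrib_left)
qed

lemma prod_shift_nat_int:
  fixes q :: "int \<Rightarrow> 'a::comm_monoid_mult"
  shows "prod (\<lambda>j. q (n + int j)) {s..<k} = prod q {n + int s..<n + int k}"
  by (rule prod.reindex_bij_witness[where i = "\<lambda>l. nat (l - n)" and j = "\<lambda>j. n + int j"]) auto

lemma prod_shift_nat_int_backward:
  fixes q :: "int \<Rightarrow> 'a::comm_monoid_mult"
  shows "prod (\<lambda>j. q (n - int j - 1)) {s..<k} = prod q {n - int k..<n - int s}"
  by (rule prod.reindex_bij_witness[where i = "\<lambda>l. nat (n - l - 1)" and j = "\<lambda>j. n - int j - 1"]) auto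

text \<open>When no entry couples a contracting coordinate with an expanding one, the coordinate
  projection onto the contracting coordinates is invariant, and both parts decay by
  \<open>triangular_recursion_decay\<close>, forward and backward in time respectively.\<close>

lemma has_ED_separated_triangular:
  fixes A :: "int \<Rightarrow> real^'d::{finite,linorder}^'d::{finite,linorder}" and S :: "'d set"
  assumes ut: "\<And>n. upper_triangular (A n)" and nz: "\<And>n i. A n $ i $ i \<noteq> 0"
    and bounded: "\<And>n a b. \<bar>A n $ a $ b\<bar> \<le> c" and inv_bounded: "\<And>n i. \<bar>inverse (A n $ i $ i)\<bar> \<le> c'"
    and contracting: "\<And>i. i \<in> S \<Longrightarrow> contracting_on UNIV (\<lambda>n. A n $ i $ i)"
    and expanding: "\<And>i. i \<notin> S \<Longrightarrow> expanding_on UNIV (\<lambda>n. A n $ i $ i)"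
    and separated: "\<And>n a b. (a \<in> S) \<noteq> (b \<in> S) \<Longrightarrow> A n $ a $ b = 0"
  shows "has_ED A"
proof -
  have c: "0 \<le> c" "0 \<le> c'"
    using bounded[of 0 undefined undefined] inv_bounded[of 0 undefined] by linarith+
  have inv: "invertible (A n)" for n
    by (rule upper_triangular_invertible[OF ut nz])
  define P :: "real^'d::{finite,linorder}^'d::{finite,linorder}" where "P = (\<chi> a b. if a = b \<and> a \<in> S then 1 else 0)"
  have P_mult: "(P ** M) $ a $ b = (if a \<in> S then M $ a $ b else 0)"
    and mult_P: "(M ** P) $ a $ b = (if b \<in> S then M $ a $ b else 0)" for M :: "real^'d::{finite,linorder}^'d::{finite,linorder}" and a b
    unfolding matrix_matrix_mult_def vec_lambda_beta
    by (subst sum_UNIV_single[where i = a], simp add: P_def, simp add: P_def)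
      (subst sum_UNIV_single[where i = b], simp add: P_def, simp add: P_def)
  have P_vec: "(P *v y) $ a = (if a \<in> S then y $ a else 0)" for y a
    unfolding matrix_vector_mult_def vec_lambda_beta
    by (subst sum_UNIV_single[where i = a]) (simp_all add: P_def)
  have idem: "P ** P = P"
    by (simp add: vec_eq_iff P_mult) (simp add: P_def)
  have "A n ** P = P ** A n" for n
    using separated by (auto simp: vec_eq_iff P_mult mult_P)
  then have com: "P ** evol A m n = evol A m n ** P" for m n
    by (simp add: evol_commute[OF inv])
  define \<rho> where "\<rho> i n = (if i \<in> S then A n $ i $ i else inverse (A n $ i $ i))" for i n
  obtain K \<alpha> where K: "0 < K" "0 < \<alpha>"
    and \<rho>: "\<And>i m n. n \<le> m \<Longrightarrow> \<bar>prod (\<rho> i) {n..<m}\<bar> \<le> K * exp (- \<alpha> * real_of_int (m - n))"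
  proof (rule contracting_on_uniform[of UNIV \<rho>])
    show "contracting_on UNIV (\<rho> i)" for i
      using contracting expanding by (cases "i \<in> S") (simp_all add: \<rho>_def[abs_def])
  qed auto
  define x where "x = exp (- \<alpha> / 2)"
  have x: "0 < x" "x < 1"
    using K by (simp_all add: x_def)
  have x_power: "x ^ k = exp (- (\<alpha> / 2) * real k)" for k
    by (simp add: x_def exp_of_nat_mult[symmetric] ac_simps)
  have x_power2: "x ^ (2 * d) = exp (- \<alpha> * real d)" for d
    unfolding x_power by simp
  have \<rho>_nat: "\<bar>prod (\<rho> i) {n + int s..<n + int k}\<bar> \<le> K * x ^ (2 * (k - s))"
    and \<rho>_nat_backward: "\<bar>prod (\<rho> i) {n - int k..<n - int s}\<bar> \<le> K * x ^ (2 * (k - s))"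
    if "s \<le> k" for i n s k
    using \<rho>[of "n + int s" "n + int k" i] \<rho>[of "n - int k" "n - int s" i] that
    by (simp_all add: x_power2)
  define C where "C = c + c * c'"
  have C: "0 \<le> C" "c \<le> C" "c' * c \<le> C"
    using c by (simp_all add: C_def)
  define M where "M = (K + 1) * (1 + 2 * K * C * CARD('d) / (x * (1 - x))) ^ CARD('d)"
  have M: "0 \<le> M"
    using K x C by (simp add: M_def)
  define N where "N = real CARD('d) * real CARD('d) * M"
  have N: "0 \<le> N"
    using M by (simp add: N_def)
  have entry_decay: "\<bar>z k $ a\<bar> \<le> M * x ^ k * norm (z 0)"
    if "\<And>i s k. i \<in> S' \<Longrightarrow> s \<le> k \<Longrightarrow> \<bar>prod (r i) {s..<k}\<bar> \<le> K * x ^ (2 * (k - s))"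
      "\<And>i k. i \<notin> S' \<Longrightarrow> z k $ i = 0"
      "\<And>i k. i \<in> S' \<Longrightarrow> \<bar>z (Suc k) $ i - r i k * z k $ i\<bar> \<le> C * (\<Sum>l\<in>{l. i < l}. \<bar>z k $ l\<bar> + \<bar>z (Suc k) $ l\<bar>)"
    for z :: "nat \<Rightarrow> real^'d::{finite,linorder}" and r S' k a
    unfolding M_def by (rule triangular_recursion_decay[OF x _ C(1)]) (use K in simp, (fact that)+)
  define L where "L = N * (norm P + norm (mat 1 - P)) + 1"
  have L: "0 < L"
    using N by (simp add: L_def add_nonneg_pos)
  have norm_bound: "norm X \<le> L * x ^ k"
    if "\<And>a b. \<bar>X $ a $ b\<bar> \<le> M * x ^ k * norm Y"
      and "Y = P \<or> Y = mat 1 - P"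
    for X Y :: "real^'d::{finite,linorder}^'d::{finite,linorder}" and k
  proof -
    have "norm X \<le> N * norm Y * x ^ k"
      using norm_matrix_le_entrywise[OF that(1)] by (simp add: N_def ac_simps)
    also have "\<dots> \<le> L * x ^ k"
    proof (rule mult_right_mono)
      have "norm Y \<le> norm P + norm (mat 1 - P)"
        using that(2) by auto
      then show "N * norm Y \<le> L"
        using mult_left_mono[OF _ N] by (force simp: L_def)
    qed (use x in simp)
    finally show ?thesis .
  qed
  have column: "((X *v (Y *v axis b 1)) $ a) = (X ** Y) $ a $ b" for X Y :: "real^'d::{finite,linorder}^'d::{finite,linorder}" and a b
    unfolding matrix_vector_mult_basis column_def by (simp add: matrix_vector_mult_def matrix_matrix_mult_def)
  have stable: "norm (evol A m n ** P) \<le> L * exp (- (\<alpha> / 2) * real_of_int (m - n))"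
    if "n \<le> m" for m n
  proof -
    define k where "k = nat (m - n)"
    have "\<bar>(evol A m n ** P) $ a $ b\<bar>
        \<le> M * x ^ k * norm P" for a b
    proof -
      define z where "z j = evol A (n + int j) n *v (P *v axis b 1)" for j
      have step: "z (Suc j) = A (n + int j) *v z j" for j
        using evol_step[of A, OF inv, of "n + int j" n] by (simp add: z_def matrix_vector_mul_assoc matrix_mul_assoc ac_simps)
      have "\<bar>z k $ a\<bar> \<le> M * x ^ k * norm (z 0)"
      proof (rule entry_decay[where S' = S and r = "\<lambda>i j. A (n + int j) $ i $ i"])
        show "\<bar>prod (\<lambda>j. A (n + int j) $ i $ i) {s..<k}\<bar> \<le> K * x ^ (2 * (k - s))" if "i \<in> S" "s \<le> k" for i s k
          using \<rho>_nat[OF that(2), of i n] that(1)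
          by (simp add: prod_shift_nat_int[of "\<lambda>l. A l $ i $ i"] \<rho>_def)
        show "z j $ i = 0" if "i \<notin> S" for i j
        proof -
          have "z j = P *v (evol A (n + int j) n *v axis b 1)"
            by (simp add: z_def matrix_vector_mul_assoc com)
          then show ?thesis
            using that by (simp add: P_vec)
        qed
        show "\<bar>z (Suc j) $ i - A (n + int j) $ i $ i * z j $ i\<bar> \<le> C * (\<Sum>l\<in>{l. i < l}. \<bar>z j $ l\<bar> + \<bar>z (Suc j) $ l\<bar>)"
          for i j
        proof -
          have "\<bar>z (Suc j) $ i - A (n + int j) $ i $ i * z j $ i\<bar> \<le> c * (\<Sum>l\<in>{l. i < l}. \<bar>z j $ l\<bar>)"
            unfolding step by (rule upper_triangular_row_bound[OF ut bounded])
          also have "\<dots> \<le> C * (\<Sum>l\<in>{l. i < l}. \<bar>z j $ l\<bar> + \<bar>z (Suc j) $ l\<bar>)"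
            using C c by (intro mult_mono sum_mono) (auto intro: sum_nonneg)
          finally show ?thesis .
        qed
      qed
      moreover have "z k $ a = (evol A m n ** P) $ a $ b"
        using that by (simp add: z_def k_def column)
      moreover have "norm (z 0) \<le> norm P"
        using norm_matrix_vector_mult_le[of P "axis b (1::real)"] by (simp add: z_def)
      moreover have "0 \<le> M * x ^ k"
        using M x by simp
      ultimately show ?thesis
        by (metis mult_left_mono order_trans)
    qed
    then have "norm (evol A m n ** P) \<le> L * x ^ k"
      by (rule norm_bound) simp
    then show ?thesis
      using that by (simp add: x_power k_def)
  qed
  have unstable: "norm (evol A m n ** (mat 1 - P)) \<le> L * exp ((\<alpha> / 2) * real_of_int (m - n))"
    if "m \<le> n" for m n
  proof -
    define k where "k = nat (n - m)"
    have "\<bar>(evol A m n ** (mat 1 - P)) $ a $ b\<bar> \<le> M * x ^ k * norm (mat 1 - P)" for a b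
    proof -
      define z where "z j = evol A (n - int j) n *v ((mat 1 - P) *v axis b 1)" for j
      have step: "z j = A (n - int j - 1) *v z (Suc j)" for j
      proof -
        have "n - int (Suc j) = n - int j - 1"
          by simp
        then show ?thesis
          unfolding z_def using evol_step[of A, OF inv, of "n - int j - 1" n]
          by (simp only:) (simp add: matrix_vector_mul_assoc matrix_mul_assoc)
      qed
      have "\<bar>z k $ a\<bar> \<le> M * x ^ k * norm (z 0)"
      proof (rule entry_decay[where S' = "- S" and r = "\<lambda>i j. inverse (A (n - int j - 1) $ i $ i)"])
        show "\<bar>prod (\<lambda>j. inverse (A (n - int j - 1) $ i $ i)) {s..<k}\<bar> \<le> K * x ^ (2 * (k - s))"
          if "i \<in> - S" "s \<le> k" for i s k
          using \<rho>_nat_backward[OF that(2), of i n] that(1)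
          by (simp add: prod_shift_nat_int_backward[of "\<lambda>l. inverse (A l $ i $ i)"] \<rho>_def)
        show "z j $ i = 0" if "i \<notin> - S" for i j
        proof -
          have "z j = (mat 1 - P) *v (evol A (n - int j) n *v axis b 1)"
            by (simp add: z_def matrix_vector_mul_assoc matrix_mult_diff_distrib com)
          then show ?thesis
            using that by (simp add: matrix_vector_mult_diff_rdistrib P_vec)
        qed
        show "\<bar>z (Suc j) $ i - inverse (A (n - int j - 1) $ i $ i) * z j $ i\<bar>
            \<le> C * (\<Sum>l\<in>{l. i < l}. \<bar>z j $ l\<bar> + \<bar>z (Suc j) $ l\<bar>)" for i j
        proof -
          let ?B = "A (n - int j - 1)"
          have "z (Suc j) $ i - inverse (?B $ i $ i) * z j $ i
              = - inverse (?B $ i $ i) * ((?B *v z (Suc j)) $ i - ?B $ i $ i * z (Suc j) $ i)"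
            using nz[of "n - int j - 1" i] by (simp add: step[of j] field_simps)
          then have "\<bar>z (Suc j) $ i - inverse (?B $ i $ i) * z j $ i\<bar>
              = \<bar>inverse (?B $ i $ i)\<bar> * \<bar>(?B *v z (Suc j)) $ i - ?B $ i $ i * z (Suc j) $ i\<bar>"
            by (simp only: abs_mult abs_minus_cancel)
          also have "\<dots> \<le> c' * (c * (\<Sum>l\<in>{l. i < l}. \<bar>z (Suc j) $ l\<bar>))"
            using c inv_bounded upper_triangular_row_bound[OF ut bounded] by (intro mult_mono) auto
          also have "\<dots> \<le> C * (\<Sum>l\<in>{l. i < l}. \<bar>z j $ l\<bar> + \<bar>z (Suc j) $ l\<bar>)"
            using C c by (simp only: mult.assoc[symmetric]) (intro mult_mono sum_mono, auto intro: sum_nonneg)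
          finally show ?thesis .
        qed
      qed
      moreover have "z k $ a = (evol A m n ** (mat 1 - P)) $ a $ b"
        using that by (simp add: z_def k_def column)
      moreover have "norm (z 0) \<le> norm (mat 1 - P)"
        using norm_matrix_vector_mult_le[of "mat 1 - P" "axis b (1::real)"] by (simp add: z_def)
      moreover have "0 \<le> M * x ^ k"
        using M x by simp
      ultimately show ?thesis
        by (metis mult_left_mono order_trans)
    qed
    then have "norm (evol A m n ** (mat 1 - P)) \<le> L * x ^ k"
      by (rule norm_bound) simp
    then show ?thesis
      using that by (simp add: x_power k_def right_diff_distrib)
  qed
  show ?thesis
    by (rule has_EDI[OF L _ _ com stable unstable]) (use K idem in simp_all)
qed

text \<open>Entries are eliminated in increasing order of this rank: eliminating entry \<open>(j, k)\<close> only
  changes entries of larger rank.\<close>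

definition elimination_rank :: "'d::{finite,linorder} \<Rightarrow> 'd \<Rightarrow> nat" where
  "elimination_rank a b = card {c. c < b} * CARD('d) + card {c. a < c}"

lemma card_less_strict_mono:
  fixes a b :: "'d::{finite,linorder}"
  shows "a < b \<Longrightarrow> card {c. c < a} < card {c. c < b}"
  by (rule psubset_card_mono) auto

lemma card_greater_strict_antimono:
  fixes a b :: "'d::{finite,linorder}"
  shows "a < b \<Longrightarrow> card {c. b < c} < card {c. a < c}"
  by (rule psubset_card_mono) auto

lemma card_greater_less_card:
  fixes a :: "'d::{finite,linorder}"
  shows "card {c. a < c} < CARD('d)" and "card {c. c < a} < CARD('d)"
  by (auto intro!: psubset_card_mono)

lemma elimination_rank_less: "elimination_rank a (b :: 'd::{finite,linorder}) < CARD('d) * CARD('d)"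
proof -
  have "elimination_rank a b < (card {c. c < b} + 1) * CARD('d)"
    using card_greater_less_card(1)[of a] by (simp add: elimination_rank_def)
  also have "\<dots> \<le> CARD('d) * CARD('d)"
    using card_greater_less_card(2)[of b] by (intro mult_right_mono) auto
  finally show ?thesis .
qed

lemma elimination_rank_inj:
  fixes a b a' b' :: "'d::{finite,linorder}"
  assumes "elimination_rank a b = elimination_rank a' b'"
  shows "a = a'" and "b = b'"
proof -
  have div: "elimination_rank a b div CARD('d) = card {c. c < b}"
    and mod: "elimination_rank a b mod CARD('d) = card {c. a < c}" for a b :: 'd
    using card_greater_less_card(1)[of a] by (simp_all add: elimination_rank_def)
  show "a = a'"
    using mod[of a b] mod[of a' b'] assms card_greater_strict_antimono[of a a'] card_greater_strict_antimono[of a' a]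
    by (metis less_irrefl linorder_neqE)
  show "b = b'"
    using div[of a b] div[of a' b'] assms card_less_strict_mono[of b b'] card_less_strict_mono[of b' b]
    by (metis less_irrefl linorder_neqE)
qed

lemma elimination_rank_above: "a < j \<Longrightarrow> elimination_rank j k < elimination_rank a (k :: 'd::{finite,linorder})"
  by (simp add: elimination_rank_def card_greater_strict_antimono)

lemma elimination_rank_right: "k < b \<Longrightarrow> elimination_rank j k < elimination_rank j (b :: 'd::{finite,linorder})"
proof -
  assume "k < b"
  then have "(card {c. c < k} + 1) * CARD('d) \<le> card {c. c < b} * CARD('d)"
    using card_less_strict_mono[of k b] by (intro mult_right_mono) auto
  then have "card {c. c < k} * CARD('d) + CARD('d) \<le> card {c. c < b} * CARD('d)"
    by (simp add: distrib_right)
  then show ?thesis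
    using card_greater_less_card(1)[of j] unfolding elimination_rank_def by linarith
qed

lemma has_ED_triangular_dichotomic_diagonal:
  fixes A :: "int \<Rightarrow> real^'d::{finite,linorder}^'d::{finite,linorder}"
  assumes ut: "\<And>n. upper_triangular (A n)" and nz: "\<And>n i. A n $ i $ i \<noteq> 0"
    and bounded: "\<And>n a b. \<bar>A n $ a $ b\<bar> \<le> c" and inv_bounded: "\<And>n i. \<bar>inverse (A n $ i $ i)\<bar> \<le> c'"
    and dich: "\<And>i. contracting_on UNIV (\<lambda>n. A n $ i $ i) \<or> expanding_on UNIV (\<lambda>n. A n $ i $ i)"
  shows "has_ED A"
proof -
  define S where "S = {i. contracting_on UNIV (\<lambda>n. A n $ i $ i)}"
  define cross where "cross a b \<longleftrightarrow> a < b \<and> (a \<in> S) \<noteq> (b \<in> S)" for a b :: 'd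
  define reduced where "reduced t B \<longleftrightarrow> (\<forall>n. upper_triangular (B n)) \<and> (\<forall>n i. B n $ i $ i = A n $ i $ i)
      \<and> (\<exists>c. \<forall>n a b. \<bar>B n $ a $ b\<bar> \<le> c) \<and> (\<forall>n a b. cross a b \<and> elimination_rank a b < t \<longrightarrow> B n $ a $ b = 0)"
    for t and B :: "int \<Rightarrow> real^'d::{finite,linorder}^'d::{finite,linorder}"
  have expanding: "expanding_on UNIV (\<lambda>n. A n $ i $ i)" if "i \<notin> S" for i
    using that dich[of i] by (simp add: S_def)
  have "reduced t B \<Longrightarrow> has_ED B" if "t \<le> CARD('d) * CARD('d)" for t B
    using that
  proof (induction t arbitrary: B rule: inc_induct)
    case base
    then obtain cB where utB: "\<And>n. upper_triangular (B n)" and diagB: "\<And>n i. B n $ i $ i = A n $ i $ i"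
      and boundedB: "\<And>n a b. \<bar>B n $ a $ b\<bar> \<le> cB"
      and cross: "\<And>n a b. cross a b \<Longrightarrow> B n $ a $ b = 0"
      using elimination_rank_less unfolding reduced_def by blast
    show ?case
    proof (rule has_ED_separated_triangular[OF utB _ boundedB, where S = S and c' = c'])
      show "B n $ a $ b = 0" if "(a \<in> S) \<noteq> (b \<in> S)" for n a b
        using that cross[of a b n] utB[of n] by (cases a b rule: linorder_cases) (auto simp: cross_def upper_triangular_def)
    qed (use nz inv_bounded expanding in \<open>simp_all add: diagB S_def\<close>)
  next
    case (step t)
    then obtain cB where utB: "\<And>n. upper_triangular (B n)" and diagB: "\<And>n i. B n $ i $ i = A n $ i $ i"
      and boundedB: "\<And>n a b. \<bar>B n $ a $ b\<bar> \<le> cB"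
      and cross: "\<And>n a b. cross a b \<Longrightarrow> elimination_rank a b < t \<Longrightarrow> B n $ a $ b = 0"
      unfolding reduced_def by blast
    show ?case
    proof (cases "\<exists>j k. cross j k \<and> elimination_rank j k = t")
      case False
      then have "reduced (Suc t) B"
        using utB diagB boundedB cross unfolding reduced_def by (metis less_Suc_eq)
      then show ?thesis
        by (rule step.IH)
    next
      case True
      then obtain j k where jk: "cross j k" "elimination_rank j k = t"
        by blast
      have "contracting_on UNIV (\<lambda>n. B n $ j $ j / B n $ k $ k) \<or> expanding_on UNIV (\<lambda>n. B n $ j $ j / B n $ k $ k)"
        using jk(1) dich[of j] dich[of k] by (intro ratio_dichotomy) (auto simp: cross_def S_def diagB)
      then obtain B' cB' where utB': "\<And>n. upper_triangular (B' n)" and diagB': "\<And>n i. B' n $ i $ i = B n $ i $ i"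
        and boundedB': "\<And>n a b. \<bar>B' n $ a $ b\<bar> \<le> cB'" and zero: "\<And>n. B' n $ j $ k = 0"
        and changed: "\<And>n a b. B' n $ a $ b \<noteq> B n $ a $ b \<Longrightarrow> (b = k \<and> a < j) \<or> (a = j \<and> k < b) \<or> (a = j \<and> b = k)"
        and ED: "has_ED B' \<Longrightarrow> has_ED B"
        using eliminate_entry[where A = B and c = cB and c' = c' and j = j and k = k, OF utB _ boundedB] nz inv_bounded jk(1)
        by (auto simp: diagB cross_def)
      have "B' n $ a $ b = 0" if "cross a b" "elimination_rank a b < Suc t" for n a b
      proof (cases "a = j \<and> b = k")
        case False
        then have "elimination_rank a b \<noteq> t"
          using elimination_rank_inj jk(2) by metis
        moreover have "B' n $ a $ b = B n $ a $ b"
          using changed[of n a b] False elimination_rank_above elimination_rank_right jk(2) that(2)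
          by (metis not_less_eq)
        ultimately show ?thesis
          using cross[OF that(1)] that(2) by simp
      qed (simp add: zero)
      then have "reduced (Suc t) B'"
        using utB' diagB' diagB boundedB' unfolding reduced_def by auto
      then show ?thesis
        by (intro ED step.IH)
    qed
  qed
  moreover have "reduced 0 A"
    using ut bounded unfolding reduced_def by blast
  ultimately show ?thesis
    by blast
qed

lemma has_ED_triangular_iff_diagonal:
  fixes A :: "int \<Rightarrow> real^'d::{finite,linorder}^'d::{finite,linorder}"
  assumes "\<And>n. upper_triangular (A n)" and "\<And>n i. A n $ i $ i \<noteq> 0"
    and "\<And>n a b. \<bar>A n $ a $ b\<bar> \<le> c" and "\<And>n i. \<bar>inverse (A n $ i $ i)\<bar> \<le> c'"
    and "\<And>i l. A (- l) $ i $ i = A l $ i $ i"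
  shows "has_ED A \<longleftrightarrow> (\<forall>i. contracting_on UNIV (\<lambda>n. A n $ i $ i) \<or> expanding_on UNIV (\<lambda>n. A n $ i $ i))"
  using has_ED_upper_triangular_diagonal[of A, OF assms(1,2,5)]
    has_ED_triangular_dichotomic_diagonal[of A, OF assms(1-4)] by blast

lemma lyapunov_seq_inverse_bound:
  fixes p :: "'i::finite \<Rightarrow> int \<Rightarrow> real"
  assumes "\<And>i. lyapunov_seq (p i)"
  obtains c where "\<And>i n. \<bar>inverse (p i n)\<bar> \<le> c"
proof -
  have "\<forall>i. \<exists>c. \<forall>n. \<bar>inverse (p i n)\<bar> \<le> c"
    using assms by (auto simp: lyapunov_seq_def bdd_above_def inverse_eq_divide)
  then obtain c where "\<And>i n. \<bar>inverse (p i n)\<bar> \<le> c i"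
    by metis
  then show ?thesis
    using that[of "Max (range c)"] by (meson Max_ge finite finite_imageI order_trans rangeI)
qed

lemma scaleR_mat: "r *\<^sub>R (mat a :: real^'n^'n) = mat (r * a)"
  by (simp add: vec_eq_iff mat_def)

theorem proposition3p3:
  fixes p :: "'d::{finite,linorder} \<Rightarrow> int \<Rightarrow> real"
    and C :: "int \<Rightarrow> (real, 'd::{finite,linorder}) vec^('d::{finite,linorder})"
  assumes "\<And>i. lyapunov_seq (p i)"
    and "\<And>i n. p i n = p i (- n)"
    and "bounded (range C)"
    and "\<And>n. upper_triangular (C n)"
    and "\<And>n i. C n $ i $ i = p i n"
  shows "ED_spectrum C = (\<Union>i. ED_spectrum (scalar_sys (p i)))"
proof -
  have nz: "p i n \<noteq> 0" for i n
    using assms(1) by (simp add: lyapunov_seq_def)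
  obtain c' where c': "\<And>i n. \<bar>inverse (p i n)\<bar> \<le> c'"
    using lyapunov_seq_inverse_bound[of p, OF assms(1)] by blast
  obtain c where c: "\<And>n. norm (C n) \<le> c"
    using assms(3) by (auto simp: bounded_iff)
  have "has_ED (\<lambda>n. exp (- \<gamma>) *\<^sub>R C n) \<longleftrightarrow> (\<forall>i. has_ED (\<lambda>n. exp (- \<gamma>) *\<^sub>R scalar_sys (p i) n))" for \<gamma>
  proof -
    let ?A = "\<lambda>n. exp (- \<gamma>) *\<^sub>R C n"
    have "has_ED ?A \<longleftrightarrow> (\<forall>i. contracting_on UNIV (\<lambda>n. ?A n $ i $ i) \<or> expanding_on UNIV (\<lambda>n. ?A n $ i $ i))"
    proof (rule has_ED_triangular_iff_diagonal[where c = "exp (- \<gamma>) * c" and c' = "exp \<gamma> * c'"])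
      show "\<bar>?A n $ a $ b\<bar> \<le> exp (- \<gamma>) * c" for n a b
        using abs_matrix_entry_le_norm[of "C n" a b] c[of n] by (simp add: abs_mult)
      show "\<bar>inverse (?A n $ i $ i)\<bar> \<le> exp \<gamma> * c'" for n i
        using c'[of i n] by (simp add: assms(5) abs_mult exp_minus)
      show "?A (- l) $ i $ i = ?A l $ i $ i" for i l
        using assms(2)[of i l] by (simp add: assms(5))
    qed (use assms(4,5) nz in \<open>auto simp: upper_triangular_def\<close>)
    moreover have "has_ED (\<lambda>n. exp (- \<gamma>) *\<^sub>R scalar_sys (p i) n)
        \<longleftrightarrow> contracting_on UNIV (\<lambda>n. ?A n $ i $ i) \<or> expanding_on UNIV (\<lambda>n. ?A n $ i $ i)" for i
      using has_ED_mat_iff[of "\<lambda>n. exp (- \<gamma>) * p i n"] nz by (simp add: assms(5) scalar_sys_def scaleR_mat)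
    ultimately show ?thesis
      by simp
  qed
  then show ?thesis
    unfolding ED_spectrum_def by blast
qed

end
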